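(* Fix $q\in[1,\infty)$ and assume that the measures $\nu^*_s=\mathrm{Law}(f^*(\boldsymbol X,S)\mid S=s)$, $s\in[K]$, are non-atomic with finite $q$-th moments. Then for every $\alpha\in[0,1]$ a solution $f^*_{\alpha,q}$ of $$\min_{f:\mathbb R^p\times[K]\to\mathbb R}\big\{\mathcal R_q(f)\;:\;\mathcal U_q(f)\le\alpha\,\mathcal U_q(f^* )\big\}$$ can be written, for all $(\boldsymbol x,s)\in\mathbb R^p\times[K]$, as $$f^*_{\alpha,q}(\boldsymbol x,s)=\alpha^{1/q}f^*(\boldsymbol x,s)+(1-\alpha^{1/q})\cdot\arg\min_{y\in\mathbb R}\Big\{\sum_{s'=1}^Kw_{s'}\big|F^{-1}_{\nu^*_{s'}}\circ F_{\nu^*_s}\circ f^*(\boldsymbol x,s)-y\big|^q\Big\},$$ and it holds that $\mathcal R_q(f^*_{\alpha,q})=(1-\alpha^{1/q})^q\,\mathcal U_q(f^* )$ and $\mathcal U_q(f^*_{\alpha,q})=\alpha\,\mathcal U_q(f^* )$.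
   Context: $(\boldsymbol X,S)$ random in $\mathbb R^p\times[K]$ with $\mathbb P(S=s)>0$; $f^*$ measurable; $\boldsymbol w\in\Delta^{K-1}$. $\mathcal R_q(f)=\sum_sw_s\mathbb E[|f(\boldsymbol X,S)-f^*(\boldsymbol X,S)|^q\mid S=s]$ and $\mathcal U_q(f)=\min_{\nu\in\mathcal P_q(\mathbb R)}\sum_sw_s\mathsf W_q^q(\mathrm{Law}(f(\boldsymbol X,S)\mid S=s),\nu)$, where $\mathcal P_q(\mathbb R)$ is the set of probability measures with finite $q$-th moment and $\mathsf W_q$ the Wasserstein-$q$ distance. $F_\mu$ is the CDF and $F^{-1}_\mu(u)=\inf\{x:F_\mu(x)\ge u\}$. For $q=1$ the $\arg\min$ may not be a singleton; the formula is to be read with a suitable choice of minimizer. *)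

theory Defs
  imports "HOL-Probability.Probability"
begin

definition cond_meas :: "'a measure \<Rightarrow> ('a \<Rightarrow> nat) \<Rightarrow> nat \<Rightarrow> 'a measure" where
  "cond_meas M S s = uniform_measure M {\<omega> \<in> space M. S \<omega> = s}"

definition cond_law :: "'a measure \<Rightarrow> ('a \<Rightarrow> 'x) \<Rightarrow> ('a \<Rightarrow> nat) \<Rightarrow> ('x \<Rightarrow> nat \<Rightarrow> real)
    \<Rightarrow> nat \<Rightarrow> real measure" where
  "cond_law M X S f s = distr (cond_meas M S s) borel (\<lambda>\<omega>. f (X \<omega>) (S \<omega>))"

definition Pq :: "real \<Rightarrow> real measure set" where
  "Pq q = {\<nu>. sets \<nu> = sets borel \<and> prob_space \<nu> \<and> (\<integral>\<^sup>+ x. ennreal (\<bar>x\<bar> powr q) \<partial>\<nu>) < \<infinity>}"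

definition couplings :: "real measure \<Rightarrow> real measure \<Rightarrow> (real \<times> real) measure set" where
  "couplings \<mu> \<nu> = {\<pi>. sets \<pi> = sets (borel \<Otimes>\<^sub>M borel) \<and> prob_space \<pi> \<and>
      distr \<pi> borel fst = \<mu> \<and> distr \<pi> borel snd = \<nu>}"

definition Wq_pow :: "real \<Rightarrow> real measure \<Rightarrow> real measure \<Rightarrow> ennreal" where
  "Wq_pow q \<mu> \<nu> = (INF \<pi> \<in> couplings \<mu> \<nu>. \<integral>\<^sup>+ z. ennreal (\<bar>fst z - snd z\<bar> powr q) \<partial>\<pi>)"

definition risk_q :: "'a measure \<Rightarrow> ('a \<Rightarrow> 'x) \<Rightarrow> ('a \<Rightarrow> nat) \<Rightarrow> nat \<Rightarrow> (nat \<Rightarrow> real) \<Rightarrow> real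
    \<Rightarrow> ('x \<Rightarrow> nat \<Rightarrow> real) \<Rightarrow> ('x \<Rightarrow> nat \<Rightarrow> real) \<Rightarrow> ennreal" where
  "risk_q M X S K w q fstar f =
     (\<Sum>s\<in>{1..K}. ennreal (w s) *
        (\<integral>\<^sup>+ \<omega>. ennreal (\<bar>f (X \<omega>) (S \<omega>) - fstar (X \<omega>) (S \<omega>)\<bar> powr q) \<partial>cond_meas M S s))"

text \<open>Unfairness U_q(f) = min over nu in P_q of sum_s w_s W_q^q(Law(f(X,S)|S=s), nu)
  (written as an infimum; the minimum is attained).\<close>
definition unfair_q :: "'a measure \<Rightarrow> ('a \<Rightarrow> 'x) \<Rightarrow> ('a \<Rightarrow> nat) \<Rightarrow> nat \<Rightarrow> (nat \<Rightarrow> real) \<Rightarrow> real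
    \<Rightarrow> ('x \<Rightarrow> nat \<Rightarrow> real) \<Rightarrow> ennreal" where
  "unfair_q M X S K w q f =
     (INF \<nu> \<in> Pq q. \<Sum>s\<in>{1..K}. ennreal (w s) * Wq_pow q (cond_law M X S f s) \<nu>)"

definition quantile :: "real measure \<Rightarrow> real \<Rightarrow> real" where
  "quantile \<mu> u = Inf {x. cdf \<mu> x \<ge> u}"

end

theory Submission
  imports Defs
begin

text \<open>
  On the real line the Wasserstein cost is realised by the quantile coupling (layer-cake formula
  plus the Frechet bound), so \<open>U\<^sub>q(f\<^sup>*) = \<Sum>\<^sub>s w\<^sub>s \<integral>\<^sub>0\<^sup>1 |Q\<^sub>s(u) - B(u)|\<^sup>q du\<close>, where \<open>Q\<^sub>s\<close> is the quantile
  function of \<open>\<nu>\<^sup>*\<^sub>s\<close> and \<open>B(u)\<close> minimises \<open>y \<mapsto> \<Sum>\<^sub>s w\<^sub>s |Q\<^sub>s(u) - y|\<^sup>q\<close> (the quantile function of the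
  barycentre). As \<open>\<nu>\<^sup>*\<^sub>s\<close> is atomless, \<open>F\<^sub>s(f\<^sup>*)\<close> is uniform given \<open>S = s\<close>, hence the interpolant
  \<open>g = t f\<^sup>* + (1 - t) B(F\<^sub>s(f\<^sup>*))\<close> with \<open>t = \<alpha>\<^bsup>1/q\<^esup>\<close> has risk \<open>(1 - t)\<^sup>q U\<^sub>q(f\<^sup>*)\<close> and unfairness at
  most \<open>t\<^sup>q U\<^sub>q(f\<^sup>*)\<close>, measured against the barycentre. Conversely Minkowski's inequality gives
  \<open>U\<^sub>q(f\<^sup>*)\<^bsup>1/q\<^esup> \<le> U\<^sub>q(f)\<^bsup>1/q\<^esup> + R\<^sub>q(f)\<^bsup>1/q\<^esup>\<close> for every \<open>f\<close>, which yields both the matching lower bound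
  on the unfairness of \<open>g\<close> and the optimality of its risk.
\<close>

section \<open>Quantile functions\<close>

definition lebesgue_01 :: "real measure" where
  "lebesgue_01 = restrict_space lborel {0<..<1}"

lemma space_lebesgue_01 [simp]: "space lebesgue_01 = {0<..<1}"
  by (simp add: lebesgue_01_def space_restrict_space)

lemma sets_lebesgue_01: "sets lebesgue_01 = sets (restrict_space borel {0<..<1::real})"
  by (simp add: lebesgue_01_def sets_restrict_space)

lemma prob_space_lebesgue_01: "prob_space lebesgue_01"
  unfolding lebesgue_01_def
  by (auto simp: emeasure_restrict_space space_restrict_space intro!: prob_spaceI)

lemma borel_measurable_lebesgue_01: "f \<in> borel_measurable borel \<Longrightarrow> f \<in> borel_measurable lebesgue_01"
  unfolding lebesgue_01_def by (rule measurable_restrict_space1) simp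

context real_distribution
begin

lemma cdf_distribution: "cdf_distribution M"
  by (simp add: cdf_distribution_def real_distribution_axioms)

lemma distr_quantile: "distr lebesgue_01 borel (quantile M) = M"
proof -
  interpret cdf_distribution M by (rule cdf_distribution)
  show ?thesis using distr_I_eq_M by (simp add: lebesgue_01_def quantile_def[abs_def])
qed

lemma measurable_quantile: "quantile M \<in> borel_measurable lebesgue_01"
proof -
  interpret cdf_distribution M by (rule cdf_distribution)
  show ?thesis
    unfolding measurable_cong_sets[OF sets_lebesgue_01 refl] quantile_def[abs_def]
    by (rule measurable_CI)
qed

lemma quantile_le_iff:
  assumes "0 < u" "u < 1"
  shows "quantile M u \<le> x \<longleftrightarrow> u \<le> cdf M x"
proof -
  interpret cdf_distribution M by (rule cdf_distribution)
  show ?thesis using pseudoinverse[OF assms, of x] by (simp add: quantile_def)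
qed

lemma mono_on_quantile: "mono_on {0<..<1} (quantile M)"
proof -
  interpret cdf_distribution M by (rule cdf_distribution)
  show ?thesis using mono_I by (simp add: quantile_def[abs_def])
qed

lemma cdf_quantile:
  assumes atomless: "\<And>x. measure M {x} = 0" and u: "0 < u" "u < 1"
  shows "cdf M (quantile M u) = u"
proof (rule antisym)
  define x where "x = quantile M u"
  have "(cdf M \<longlongrightarrow> cdf M x) (at_left x)"
    using isCont_cdf atomless by (simp add: isCont_def filterlim_at_split)
  moreover have "cdf M y < u" if "y < x" for y
    using quantile_le_iff[OF u, of y] that by (auto simp: x_def)
  then have "eventually (\<lambda>y. cdf M y \<le> u) (at_left x)"
    unfolding eventually_at_left_field by (intro exI[of _ "x - 1"]) (auto intro: less_imp_le)
  ultimately show "cdf M x \<le> u"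
    by (rule tendsto_upperbound) simp
  show "u \<le> cdf M x" using quantile_le_iff[OF u, of x] by (simp add: x_def)
qed

lemma quantile_nonpos: "u \<le> 0 \<Longrightarrow> quantile M u = quantile M 0"
proof -
  assume "u \<le> 0"
  then have "{x. u \<le> cdf M x} = UNIV" "{x. 0 \<le> cdf M x} = UNIV"
    using cdf_nonneg by (auto intro: order_trans)
  then show ?thesis unfolding quantile_def by simp
qed

lemma quantile_gt_one: "1 < u \<Longrightarrow> quantile M u = quantile M 2"
proof -
  assume u: "1 < u"
  have "cdf M x < u" "cdf M x < 2" for x
    using cdf_bounded_prob[of x] u by linarith+
  then have "{x. u \<le> cdf M x} = {}" "{x. 2 \<le> cdf M x} = {}"
    by (auto dest: leD)
  then show ?thesis unfolding quantile_def by simp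
qed

lemma measure_quantile_preimage:
  "A \<in> sets borel \<Longrightarrow> measure lebesgue_01 {u \<in> space lebesgue_01. quantile M u \<in> A} = measure M A"
  using measure_distr[OF measurable_quantile, of A] by (simp add: distr_quantile vimage_def Int_def conj_commute)

lemma nn_integral_quantile:
  assumes "H \<in> borel_measurable borel"
  shows "(\<integral>\<^sup>+ u. H (quantile M u) \<partial>lebesgue_01) = (\<integral>\<^sup>+ x. H x \<partial>M)"
proof -
  have "H \<in> borel_measurable (distr lebesgue_01 borel (quantile M))"
    using assms by simp
  from nn_integral_distr[OF measurable_quantile this] show ?thesis
    by (simp add: distr_quantile)
qed

end

section \<open>Optimal transport on the real line\<close>

definition powr_layer :: "real \<Rightarrow> real \<Rightarrow> real \<Rightarrow> (real \<times> real) set" where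
  "powr_layer q a b = {(x, y). a \<le> x \<and> x < b \<and> 0 < y \<and> y < (b - x) powr (q - 1)}"

lemma powr_layer_in_borel [measurable]: "powr_layer q a b \<in> sets borel"
proof -
  have "powr_layer q a b = {z \<in> space (borel \<Otimes>\<^sub>M borel).
      a \<le> fst z \<and> fst z < b \<and> 0 < snd z \<and> snd z < (b - fst z) powr (q - 1)}"
    by (auto simp: powr_layer_def space_pair_measure)
  also have "\<dots> \<in> sets (borel \<Otimes>\<^sub>M borel)" by measurable
  finally show ?thesis by (metis borel_prod)
qed

lemma has_integral_diff_powr:
  fixes q a b :: real
  assumes "q \<ge> 1" "a \<le> b"
  shows "((\<lambda>x. (b - x) powr (q - 1)) has_integral (b - a) powr q / q) {a..b}"
proof -
  define F where "F x = - ((b - x) powr q / q)" for x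
  have "((\<lambda>x. (b - x) powr (q - 1)) has_integral (F b - F a)) {a..b}"
  proof (rule fundamental_theorem_of_calculus_interior)
    show "continuous_on {a..b} F" unfolding F_def using assms
      by (intro continuous_intros continuous_on_powr') auto
    fix x assume x: "x \<in> {a<..<b}"
    have "(F has_real_derivative (b - x) powr (q - 1)) (at x)"
      unfolding F_def using x assms
      by (auto intro!: derivative_eq_intros simp: powr_diff field_simps)
    then show "(F has_vector_derivative (b - x) powr (q - 1)) (at x)"
      by (simp add: has_real_derivative_iff_has_vector_derivative)
  qed fact
  then show ?thesis by (simp add: F_def)
qed

lemma emeasure_powr_layer:
  fixes q a b :: real
  assumes "q \<ge> 1" "a \<le> b"
  shows "emeasure lborel (powr_layer q a b) = ennreal ((b - a) powr q / q)"
proof -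
  have section_eq: "(\<integral>\<^sup>+ y. indicator (powr_layer q a b) (x, y) \<partial>lborel)
      = ennreal ((b - x) powr (q - 1)) * indicator {a..b} x" for x
  proof (cases "a \<le> x \<and> x < b")
    case True
    then have "(\<lambda>y. indicator (powr_layer q a b) (x, y) :: ennreal) = indicator {0<..<(b - x) powr (q - 1)}"
      by (auto simp: powr_layer_def indicator_def fun_eq_iff)
    then show ?thesis using True by simp
  next
    case False
    then have "(\<lambda>y. indicator (powr_layer q a b) (x, y) :: ennreal) = (\<lambda>_. 0)"
      by (auto simp: powr_layer_def indicator_def fun_eq_iff)
    then show ?thesis using False by (auto simp: indicator_def)
  qed
  have "emeasure lborel (powr_layer q a b) = (\<integral>\<^sup>+ z. indicator (powr_layer q a b) z \<partial>(lborel \<Otimes>\<^sub>M lborel))"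
    by (simp add: lborel_prod)
  also have "\<dots> = (\<integral>\<^sup>+ x. \<integral>\<^sup>+ y. indicator (powr_layer q a b) (x, y) \<partial>lborel \<partial>lborel)"
    by (rule lborel.nn_integral_fst[symmetric]) (simp add: lborel_prod)
  also have "\<dots> = (\<integral>\<^sup>+ x. ennreal ((b - x) powr (q - 1)) * indicator {a..b} x \<partial>lborel)"
    by (simp add: section_eq)
  also have "\<dots> = ennreal ((b - a) powr q / q)"
    by (rule nn_integral_has_integral_lebesgue'[OF _ has_integral_diff_powr[OF assms]]) simp
  finally show ?thesis .
qed

text \<open>Layer-cake representation of the cost: \<open>|a - b|\<^sup>q\<close> is \<open>q\<close> times the area under the
  graph of \<open>x \<mapsto> (b - x)\<^sup>q\<^sup>-\<^sup>1\<close> over \<open>[a, b)\<close> (or with \<open>a\<close>, \<open>b\<close> exchanged).\<close>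

lemma abs_diff_powr_eq_layers:
  fixes q a b :: real
  assumes q: "q \<ge> 1"
  shows "ennreal (\<bar>a - b\<bar> powr q)
    = ennreal q * (emeasure lborel (powr_layer q a b) + emeasure lborel (powr_layer q b a))"
proof -
  have ordered: "ennreal (\<bar>a - b\<bar> powr q)
      = ennreal q * (emeasure lborel (powr_layer q a b) + emeasure lborel (powr_layer q b a))"
    if "a \<le> b" for a b :: real
  proof -
    have "powr_layer q b a = {}" using that by (auto simp: powr_layer_def)
    then have "ennreal q * (emeasure lborel (powr_layer q a b) + emeasure lborel (powr_layer q b a))
        = ennreal q * ennreal ((b - a) powr q / q)"
      using emeasure_powr_layer[OF q that] by simp
    also have "\<dots> = ennreal ((b - a) powr q)"
      using q by (simp add: ennreal_mult[symmetric])
    finally show ?thesis using that by (simp add: abs_if)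
  qed
  show ?thesis
  proof (cases "a \<le> b")
    case False
    then show ?thesis
      using ordered[of b a] by (simp add: abs_minus_commute add.commute)
  qed (rule ordered)
qed

definition layer_right_ends :: "real \<Rightarrow> real \<times> real \<Rightarrow> real set" where
  "layer_right_ends q \<theta> = {b. fst \<theta> < b \<and> 0 < snd \<theta> \<and> snd \<theta> < (b - fst \<theta>) powr (q - 1)}"

lemma layer_right_ends_in_borel [measurable]: "layer_right_ends q \<theta> \<in> sets borel"
proof -
  have "layer_right_ends q \<theta>
      = {b \<in> space borel. fst \<theta> < b \<and> 0 < snd \<theta> \<and> snd \<theta> < (b - fst \<theta>) powr (q - 1)}"
    by (simp add: layer_right_ends_def)
  also have "\<dots> \<in> sets borel" by measurable
  finally show ?thesis .
qed

lemma layer_right_ends_upward_closed: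
  "q \<ge> 1 \<Longrightarrow> b \<in> layer_right_ends q \<theta> \<Longrightarrow> b \<le> b' \<Longrightarrow> b' \<in> layer_right_ends q \<theta>"
  unfolding layer_right_ends_def using powr_mono2[of "q - 1" "b - fst \<theta>" "b' - fst \<theta>"] by auto

lemma mem_powr_layer_iff: "\<theta> \<in> powr_layer q a b \<longleftrightarrow> a \<le> fst \<theta> \<and> b \<in> layer_right_ends q \<theta>"
  by (cases \<theta>) (auto simp: powr_layer_def layer_right_ends_def)

lemma nn_integral_abs_diff_powr_layers:
  assumes q: "q \<ge> 1" and P: "sigma_finite_measure P" "sets P = sets (borel \<Otimes>\<^sub>M borel)"
  shows "(\<integral>\<^sup>+ z. ennreal (\<bar>fst z - snd z\<bar> powr q) \<partial>P) =
    ennreal q * (\<integral>\<^sup>+ \<theta>. emeasure P ({..fst \<theta>} \<times> layer_right_ends q \<theta>)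
                       + emeasure P (layer_right_ends q \<theta> \<times> {..fst \<theta>}) \<partial>lborel)"
proof -
  interpret pair_sigma_finite P lborel
    using P(1) by (simp add: pair_sigma_finite_def lborel.sigma_finite_measure_axioms)
  define g where "g z \<theta> = (indicator (powr_layer q (fst z) (snd z)) \<theta>
      + indicator (powr_layer q (snd z) (fst z)) \<theta> :: ennreal)" for z \<theta> :: "real \<times> real"
  have g_borel: "case_prod g \<in> borel_measurable ((borel \<Otimes>\<^sub>M borel) \<Otimes>\<^sub>M (borel \<Otimes>\<^sub>M borel))"
    unfolding g_def powr_layer_def by (simp add: indicator_def) measurable
  have sets_eq: "sets (P \<Otimes>\<^sub>M lborel)
      = sets ((borel \<Otimes>\<^sub>M borel) \<Otimes>\<^sub>M (borel \<Otimes>\<^sub>M borel :: (real \<times> real) measure))"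
    using sets_pair_measure_cong[OF P(2), of lborel "borel \<Otimes>\<^sub>M borel"]
    by (simp only: sets_lborel borel_prod) blast
  have g: "case_prod g \<in> borel_measurable (P \<Otimes>\<^sub>M lborel)"
    unfolding measurable_cong_sets[OF sets_eq refl] by (rule g_borel)
  have "(\<integral>\<^sup>+ z. ennreal (\<bar>fst z - snd z\<bar> powr q) \<partial>P) = (\<integral>\<^sup>+ z. ennreal q * (\<integral>\<^sup>+ \<theta>. g z \<theta> \<partial>lborel) \<partial>P)"
    by (intro nn_integral_cong) (simp add: abs_diff_powr_eq_layers[OF q] g_def nn_integral_add)
  also have "\<dots> = ennreal q * (\<integral>\<^sup>+ \<theta>. (\<integral>\<^sup>+ z. g z \<theta> \<partial>P) \<partial>lborel)"
    using nn_integral_cmult[OF lborel.borel_measurable_nn_integral[OF g]] Fubini'[OF g] by simp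
  also have "(\<lambda>\<theta>. \<integral>\<^sup>+ z. g z \<theta> \<partial>P) = (\<lambda>\<theta>. emeasure P ({..fst \<theta>} \<times> layer_right_ends q \<theta>)
      + emeasure P (layer_right_ends q \<theta> \<times> {..fst \<theta>}))"
  proof
    fix \<theta> :: "real \<times> real"
    have "{..fst \<theta>} \<times> layer_right_ends q \<theta> \<in> sets P" "layer_right_ends q \<theta> \<times> {..fst \<theta>} \<in> sets P"
      unfolding P(2) by (intro pair_measureI) auto
    moreover have "(\<lambda>z. g z \<theta>) = (\<lambda>z. indicator ({..fst \<theta>} \<times> layer_right_ends q \<theta>) z
        + indicator (layer_right_ends q \<theta> \<times> {..fst \<theta>}) z)"
      by (auto simp: g_def fun_eq_iff indicator_def mem_powr_layer_iff)
    ultimately show "(\<integral>\<^sup>+ z. g z \<theta> \<partial>P) = emeasure P ({..fst \<theta>} \<times> layer_right_ends q \<theta>)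
        + emeasure P (layer_right_ends q \<theta> \<times> {..fst \<theta>})"
      by (simp add: nn_integral_add)
  qed
  finally show ?thesis .
qed

lemma couplings_pair_distr:
  assumes "prob_space N" "f \<in> borel_measurable N" "g \<in> borel_measurable N"
    and "distr N borel f = \<mu>" "distr N borel g = \<nu>"
  shows "distr N (borel \<Otimes>\<^sub>M borel) (\<lambda>u. (f u, g u)) \<in> couplings \<mu> \<nu>"
proof -
  have fg: "(\<lambda>u. (f u, g u)) \<in> measurable N (borel \<Otimes>\<^sub>M borel)"
    using assms(2,3) by (rule measurable_Pair)
  have "distr (distr N (borel \<Otimes>\<^sub>M borel) (\<lambda>u. (f u, g u))) borel fst = distr N borel f"
    "distr (distr N (borel \<Otimes>\<^sub>M borel) (\<lambda>u. (f u, g u))) borel snd = distr N borel g"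
    by (simp_all add: distr_distr[OF measurable_fst fg] distr_distr[OF measurable_snd fg] comp_def)
  then show ?thesis
    using assms prob_space.prob_space_distr[OF assms(1) fg] unfolding couplings_def by simp
qed

lemma Wq_pow_le_nn_integral:
  assumes "prob_space N" "f \<in> borel_measurable N" "g \<in> borel_measurable N"
    and "distr N borel f = \<mu>" "distr N borel g = \<nu>"
  shows "Wq_pow q \<mu> \<nu> \<le> (\<integral>\<^sup>+ u. ennreal (\<bar>f u - g u\<bar> powr q) \<partial>N)"
proof -
  have fg: "(\<lambda>u. (f u, g u)) \<in> measurable N (borel \<Otimes>\<^sub>M borel)"
    using assms(2,3) by (rule measurable_Pair)
  have "Wq_pow q \<mu> \<nu>
      \<le> (\<integral>\<^sup>+ z. ennreal (\<bar>fst z - snd z\<bar> powr q) \<partial>distr N (borel \<Otimes>\<^sub>M borel) (\<lambda>u. (f u, g u)))"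
    unfolding Wq_pow_def by (rule INF_lower) (rule couplings_pair_distr[OF assms])
  also have "\<dots> = (\<integral>\<^sup>+ u. ennreal (\<bar>f u - g u\<bar> powr q) \<partial>N)"
    by (subst nn_integral_distr[OF fg]) simp_all
  finally show ?thesis .
qed

lemma couplings_measure_Times_ge:
  assumes \<pi>: "\<pi> \<in> couplings \<mu> \<nu>" and A: "A \<in> sets borel" and B: "B \<in> sets borel"
  shows "measure \<mu> A + measure \<nu> B - 1 \<le> measure \<pi> (A \<times> B)"
proof -
  have sets_\<pi>: "sets \<pi> = sets (borel \<Otimes>\<^sub>M borel)" and "prob_space \<pi>"
    and marginals: "distr \<pi> borel fst = \<mu>" "distr \<pi> borel snd = \<nu>"
    using \<pi> by (auto simp: couplings_def)
  interpret prob_space \<pi> by fact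
  have space_\<pi>: "space \<pi> = UNIV"
    using sets_eq_imp_space_eq[OF sets_\<pi>] by (simp add: space_pair_measure)
  have fst: "fst \<in> borel_measurable \<pi>" and snd: "snd \<in> borel_measurable \<pi>"
    by (simp_all add: measurable_cong_sets[OF sets_\<pi> refl])
  have sets: "A \<times> B \<in> sets \<pi>" "A \<times> - B \<in> sets \<pi>" "UNIV \<times> - B \<in> sets \<pi>"
    unfolding sets_\<pi> using A B by auto
  have "measure \<mu> A = measure \<pi> (fst -` A \<inter> space \<pi>)"
    using measure_distr[OF fst, of A] A marginals by simp
  also have "fst -` A \<inter> space \<pi> = (A \<times> B) \<union> (A \<times> - B)"
    using space_\<pi> by auto
  also have "measure \<pi> \<dots> = measure \<pi> (A \<times> B) + measure \<pi> (A \<times> - B)"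
    using sets by (intro finite_measure_Union) auto
  also have "measure \<pi> (A \<times> - B) \<le> measure \<pi> (UNIV \<times> - B)"
    using sets by (intro finite_measure_mono) auto
  also have "UNIV \<times> - B = space \<pi> - (snd -` B \<inter> space \<pi>)"
    using space_\<pi> by auto
  also have "measure \<pi> \<dots> = 1 - measure \<nu> B"
    using measure_distr[OF snd, of B] B marginals measurable_sets[OF snd B]
    by (simp add: prob_compl)
  finally show ?thesis by simp
qed

lemma (in prob_space) measure_Int_eq_of_Un_eq_space:
  assumes "A \<in> events" "B \<in> events" "A \<union> B = space M"
  shows "prob (A \<inter> B) = prob A + prob B - 1"
  using finite_measure_Union'[OF assms(1,2)] finite_measure_Diff'[OF assms(2,1)] assms(3) prob_space
  by (simp add: Int_commute)

text \<open>Comonotonicity: \<open>{Q\<^sub>\<mu> \<le> x}\<close> is an initial and \<open>{Q\<^sub>\<nu> \<in> V}\<close> a final segment of \<open>(0, 1)\<close>,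
  so they cover \<open>(0, 1)\<close> as soon as they meet.\<close>

lemma quantile_le_or_quantile_mem:
  assumes \<mu>: "real_distribution \<mu>" and \<nu>: "real_distribution \<nu>"
    and V: "\<And>b b'. b \<in> V \<Longrightarrow> b \<le> b' \<Longrightarrow> b' \<in> V"
    and u0: "u0 \<in> {0<..<1}" "quantile \<mu> u0 \<le> x" "quantile \<nu> u0 \<in> V" and u: "u \<in> {0<..<1}"
  shows "quantile \<mu> u \<le> x \<or> quantile \<nu> u \<in> V"
proof (cases "u \<le> u0")
  case True
  then show ?thesis
    using u u0 mono_onD[OF real_distribution.mono_on_quantile[OF \<mu>], of u u0] by auto
next
  case False
  then show ?thesis
    using u u0 mono_onD[OF real_distribution.mono_on_quantile[OF \<nu>], of u0 u] V by auto
qed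

lemma measure_quantiles_lower_upper_le:
  assumes \<mu>: "real_distribution \<mu>" and \<nu>: "real_distribution \<nu>"
    and V: "V \<in> sets borel" "\<And>b b'. b \<in> V \<Longrightarrow> b \<le> b' \<Longrightarrow> b' \<in> V"
  shows "measure lebesgue_01 {u \<in> space lebesgue_01. quantile \<mu> u \<le> x \<and> quantile \<nu> u \<in> V}
    \<le> max 0 (measure \<mu> {..x} + measure \<nu> V - 1)"
proof -
  interpret prob_space lebesgue_01 by (rule prob_space_lebesgue_01)
  define E1 where "E1 = {u \<in> space lebesgue_01. quantile \<mu> u \<in> {..x}}"
  define E2 where "E2 = {u \<in> space lebesgue_01. quantile \<nu> u \<in> V}"
  have E: "E1 \<in> events" "E2 \<in> events"
    unfolding E1_def E2_def using V(1) real_distribution.measurable_quantile[OF \<mu>]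
      real_distribution.measurable_quantile[OF \<nu>] by measurable
  have set_eq: "{u \<in> space lebesgue_01. quantile \<mu> u \<le> x \<and> quantile \<nu> u \<in> V} = E1 \<inter> E2"
    by (auto simp: E1_def E2_def)
  have "prob (E1 \<inter> E2) = measure \<mu> {..x} + measure \<nu> V - 1" if "E1 \<inter> E2 \<noteq> {}"
  proof -
    from that obtain u0 where u0: "u0 \<in> E1" "u0 \<in> E2" by auto
    have "u \<in> E1 \<union> E2" if u: "u \<in> space lebesgue_01" for u
    proof -
      have "quantile \<mu> u \<le> x \<or> quantile \<nu> u \<in> V"
        by (rule quantile_le_or_quantile_mem[OF \<mu> \<nu>]) (use V(2) u0 u in \<open>auto simp: E1_def E2_def\<close>)
      then show ?thesis using u by (auto simp: E1_def E2_def)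
    qed
    moreover have "E1 \<union> E2 \<subseteq> space lebesgue_01"
      by (auto simp: E1_def E2_def)
    ultimately have "E1 \<union> E2 = space lebesgue_01"
      by blast
    moreover have "prob E1 = measure \<mu> {..x}"
      unfolding E1_def by (rule real_distribution.measure_quantile_preimage[OF \<mu>]) simp
    moreover have "prob E2 = measure \<nu> V"
      unfolding E2_def by (rule real_distribution.measure_quantile_preimage[OF \<nu> V(1)])
    ultimately show ?thesis
      using measure_Int_eq_of_Un_eq_space[OF E] by simp
  qed
  then show ?thesis
    unfolding set_eq by (cases "E1 \<inter> E2 = {}") auto
qed

text \<open>Among all couplings, the quantile coupling puts the least mass on the quadrant-type
  sets \<open>{..x} \<times> V\<close> with \<open>V\<close> upward closed: exactly the Frechet lower bound.\<close>

lemma emeasure_quantiles_le_couplings: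
  assumes \<pi>: "\<pi> \<in> couplings \<mu> \<nu>" and \<mu>: "real_distribution \<mu>" and \<nu>: "real_distribution \<nu>"
    and V: "V \<in> sets borel" "\<And>b b'. b \<in> V \<Longrightarrow> b \<le> b' \<Longrightarrow> b' \<in> V"
  shows "emeasure lebesgue_01 {u \<in> space lebesgue_01. quantile \<mu> u \<le> x \<and> quantile \<nu> u \<in> V}
      \<le> emeasure \<pi> ({..x} \<times> V)"
    and "emeasure lebesgue_01 {u \<in> space lebesgue_01. quantile \<mu> u \<in> V \<and> quantile \<nu> u \<le> x}
      \<le> emeasure \<pi> (V \<times> {..x})"
proof -
  interpret L: prob_space lebesgue_01 by (rule prob_space_lebesgue_01)
  interpret P: prob_space \<pi> using \<pi> by (simp add: couplings_def)
  have sets_\<pi>: "sets \<pi> = sets (borel \<Otimes>\<^sub>M borel)" using \<pi> by (simp add: couplings_def)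
  have "{..x} \<times> V \<in> sets \<pi>" "V \<times> {..x} \<in> sets \<pi>"
    unfolding sets_\<pi> using V(1) by auto
  moreover have "measure lebesgue_01 {u \<in> space lebesgue_01. quantile \<mu> u \<le> x \<and> quantile \<nu> u \<in> V}
      \<le> measure \<pi> ({..x} \<times> V)"
  proof -
    have "measure lebesgue_01 {u \<in> space lebesgue_01. quantile \<mu> u \<le> x \<and> quantile \<nu> u \<in> V}
        \<le> max 0 (measure \<mu> {..x} + measure \<nu> V - 1)"
      by (rule measure_quantiles_lower_upper_le[OF \<mu> \<nu> V])
    also have "\<dots> \<le> measure \<pi> ({..x} \<times> V)"
      using couplings_measure_Times_ge[OF \<pi> _ V(1), of "{..x}"] by simp
    finally show ?thesis .
  qed
  moreover have "measure lebesgue_01 {u \<in> space lebesgue_01. quantile \<mu> u \<in> V \<and> quantile \<nu> u \<le> x}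
      \<le> measure \<pi> (V \<times> {..x})"
  proof -
    have "{u \<in> space lebesgue_01. quantile \<mu> u \<in> V \<and> quantile \<nu> u \<le> x}
        = {u \<in> space lebesgue_01. quantile \<nu> u \<le> x \<and> quantile \<mu> u \<in> V}"
      by auto
    also have "measure lebesgue_01 \<dots> \<le> max 0 (measure \<nu> {..x} + measure \<mu> V - 1)"
      by (rule measure_quantiles_lower_upper_le[OF \<nu> \<mu> V])
    also have "\<dots> \<le> measure \<pi> (V \<times> {..x})"
      using couplings_measure_Times_ge[OF \<pi> V(1), of "{..x}"] by simp
    finally show ?thesis .
  qed
  ultimately show
    "emeasure lebesgue_01 {u \<in> space lebesgue_01. quantile \<mu> u \<le> x \<and> quantile \<nu> u \<in> V}
      \<le> emeasure \<pi> ({..x} \<times> V)"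
    "emeasure lebesgue_01 {u \<in> space lebesgue_01. quantile \<mu> u \<in> V \<and> quantile \<nu> u \<le> x}
      \<le> emeasure \<pi> (V \<times> {..x})"
    by (simp_all add: L.emeasure_eq_measure P.emeasure_eq_measure)
qed

theorem Wq_pow_eq_quantile_coupling:
  assumes q: "q \<ge> 1" and \<mu>: "real_distribution \<mu>" and \<nu>: "real_distribution \<nu>"
  shows "Wq_pow q \<mu> \<nu> = (\<integral>\<^sup>+ u. ennreal (\<bar>quantile \<mu> u - quantile \<nu> u\<bar> powr q) \<partial>lebesgue_01)"
proof (rule antisym)
  note Q[measurable] = real_distribution.measurable_quantile[OF \<mu>]
    real_distribution.measurable_quantile[OF \<nu>]
  show "Wq_pow q \<mu> \<nu> \<le> (\<integral>\<^sup>+ u. ennreal (\<bar>quantile \<mu> u - quantile \<nu> u\<bar> powr q) \<partial>lebesgue_01)"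
    by (rule Wq_pow_le_nn_integral[OF prob_space_lebesgue_01 Q
          real_distribution.distr_quantile[OF \<mu>] real_distribution.distr_quantile[OF \<nu>]])
  define \<pi>\<^sub>Q where "\<pi>\<^sub>Q = distr lebesgue_01 (borel \<Otimes>\<^sub>M borel) (\<lambda>u. (quantile \<mu> u, quantile \<nu> u))"
  have Q_pair: "(\<lambda>u. (quantile \<mu> u, quantile \<nu> u)) \<in> measurable lebesgue_01 (borel \<Otimes>\<^sub>M borel)"
    by measurable
  have \<pi>\<^sub>Q: "\<pi>\<^sub>Q \<in> couplings \<mu> \<nu>"
    unfolding \<pi>\<^sub>Q_def by (rule couplings_pair_distr[OF prob_space_lebesgue_01 Q
          real_distribution.distr_quantile[OF \<mu>] real_distribution.distr_quantile[OF \<nu>]])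
  have layers: "(\<integral>\<^sup>+ z. ennreal (\<bar>fst z - snd z\<bar> powr q) \<partial>\<pi>) =
      ennreal q * (\<integral>\<^sup>+ \<theta>. emeasure \<pi> ({..fst \<theta>} \<times> layer_right_ends q \<theta>)
        + emeasure \<pi> (layer_right_ends q \<theta> \<times> {..fst \<theta>}) \<partial>lborel)"
    if "\<pi> \<in> couplings \<mu> \<nu>" for \<pi>
    using that by (intro nn_integral_abs_diff_powr_layers[OF q])
      (auto simp: couplings_def prob_space_imp_sigma_finite)
  have emeasure_\<pi>\<^sub>Q: "emeasure \<pi>\<^sub>Q (A \<times> B)
      = emeasure lebesgue_01 {u \<in> space lebesgue_01. quantile \<mu> u \<in> A \<and> quantile \<nu> u \<in> B}"
    if "A \<in> sets borel" "B \<in> sets borel" for A B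
    using that unfolding \<pi>\<^sub>Q_def
    by (subst emeasure_distr[OF Q_pair]) (auto simp: vimage_def Int_def conj_commute)
  have "(\<integral>\<^sup>+ u. ennreal (\<bar>quantile \<mu> u - quantile \<nu> u\<bar> powr q) \<partial>lebesgue_01)
      = (\<integral>\<^sup>+ z. ennreal (\<bar>fst z - snd z\<bar> powr q) \<partial>\<pi>\<^sub>Q)"
    unfolding \<pi>\<^sub>Q_def by (subst nn_integral_distr[OF Q_pair]) simp_all
  also have "\<dots> \<le> (\<integral>\<^sup>+ z. ennreal (\<bar>fst z - snd z\<bar> powr q) \<partial>\<pi>)" if \<pi>: "\<pi> \<in> couplings \<mu> \<nu>" for \<pi>
    unfolding layers[OF \<pi>\<^sub>Q] layers[OF \<pi>]
    using emeasure_quantiles_le_couplings[OF \<pi> \<mu> \<nu> layer_right_ends_in_borel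
        layer_right_ends_upward_closed[OF q]]
    by (intro mult_left_mono nn_integral_mono add_mono) (simp_all add: emeasure_\<pi>\<^sub>Q)
  finally show "(\<integral>\<^sup>+ u. ennreal (\<bar>quantile \<mu> u - quantile \<nu> u\<bar> powr q) \<partial>lebesgue_01) \<le> Wq_pow q \<mu> \<nu>"
    unfolding Wq_pow_def by (rule INF_greatest)
qed

section \<open>Minkowski's inequality\<close>

lemma powr_inverse_powr: "q > 0 \<Longrightarrow> x \<ge> 0 \<Longrightarrow> (x powr (1 / q)) powr q = (x :: real)"
  by (simp add: powr_powr)

lemma powr_root_mult:
  fixes q t D :: real
  assumes "q > 0" "0 \<le> t" "0 \<le> D"
  shows "(t powr q * D) powr (1 / q) = t * D powr (1 / q)"
  using assms by (simp add: powr_mult powr_powr)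

lemma powr_le_powr_iff:
  "q > 0 \<Longrightarrow> x \<ge> 0 \<Longrightarrow> y \<ge> 0 \<Longrightarrow> x powr q \<le> y powr q \<longleftrightarrow> x \<le> (y :: real)"
  using powr_mono2[of q x y] powr_less_mono2[of q y x] by (auto simp: not_le[symmetric])

lemma convex_on_powr_nonneg:
  assumes q: "q \<ge> 1"
  shows "convex_on {0..} (\<lambda>x::real. x powr q)"
proof (rule convex_onI)
  fix t x y :: real
  assume t: "0 < t" "t < 1" and x: "x \<in> {0..}" and y: "y \<in> {0..}"
  have t_powr: "s powr q \<le> s" if "0 \<le> s" "s \<le> 1" for s :: real
    using powr_mono'[of 1 q s] that q by simp
  consider "0 < x" "0 < y" | "x = 0" | "y = 0"
    using x y by fastforce
  then show "((1 - t) *\<^sub>R x + t *\<^sub>R y) powr q \<le> (1 - t) * x powr q + t * y powr q"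
  proof cases
    case 1
    then show ?thesis using convex_onD[OF powr_convex[OF q], of t x y] t by simp
  next
    case 2
    then have "((1 - t) *\<^sub>R x + t *\<^sub>R y) powr q = t powr q * y powr q"
      using t y by (simp add: powr_mult)
    also have "\<dots> \<le> t * y powr q"
      using t t_powr[of t] by (intro mult_right_mono) auto
    finally show ?thesis using 2 by simp
  next
    case 3
    then have "((1 - t) *\<^sub>R x + t *\<^sub>R y) powr q = (1 - t) powr q * x powr q"
      using t x by (simp add: powr_mult)
    also have "\<dots> \<le> (1 - t) * x powr q"
      using t t_powr[of "1 - t"] by (intro mult_right_mono) auto
    finally show ?thesis using 3 by simp
  qed
qed simp

lemma abs_convex_comb_powr_le:
  fixes q x y t :: real
  assumes q: "q \<ge> 1" and t: "0 \<le> t" "t \<le> 1"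
  shows "\<bar>(1 - t) * x + t * y\<bar> powr q \<le> (1 - t) * \<bar>x\<bar> powr q + t * \<bar>y\<bar> powr q"
proof -
  have "\<bar>(1 - t) * x + t * y\<bar> \<le> (1 - t) * \<bar>x\<bar> + t * \<bar>y\<bar>"
    using abs_triangle_ineq[of "(1 - t) * x" "t * y"] t by (simp add: abs_mult)
  then have "\<bar>(1 - t) * x + t * y\<bar> powr q \<le> ((1 - t) * \<bar>x\<bar> + t * \<bar>y\<bar>) powr q"
    using q by (intro powr_mono2) auto
  also have "\<dots> \<le> (1 - t) * \<bar>x\<bar> powr q + t * \<bar>y\<bar> powr q"
    using convex_onD[OF convex_on_powr_nonneg[OF q], of t "\<bar>x\<bar>" "\<bar>y\<bar>"] t by simp
  finally show ?thesis .
qed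

text \<open>The pointwise form of Minkowski's inequality: convexity applied to
  \<open>x + y = (a + b) ((a / (a + b)) (x / a) + (b / (a + b)) (y / b))\<close>.\<close>

lemma abs_add_powr_le:
  fixes q a b x y :: real
  assumes q: "q \<ge> 1" and a: "a > 0" and b: "b > 0"
  shows "\<bar>x + y\<bar> powr q
    \<le> (a + b) powr q * (a / (a + b) * (\<bar>x\<bar> powr q / a powr q) + b / (a + b) * (\<bar>y\<bar> powr q / b powr q))"
proof -
  define t where "t = b / (a + b)"
  have t: "0 \<le> t" "t \<le> 1" "1 - t = a / (a + b)"
    using a b by (auto simp: t_def field_simps)
  have "(a + b) * ((1 - t) * (x / a)) = x"
    using a b unfolding t(3) by simp
  moreover have "(a + b) * (t * (y / b)) = y"
    using a b unfolding t_def by simp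
  ultimately have "x + y = (a + b) * ((1 - t) * (x / a) + t * (y / b))"
    by (simp add: distrib_left)
  then have "\<bar>x + y\<bar> powr q = (a + b) powr q * \<bar>(1 - t) * (x / a) + t * (y / b)\<bar> powr q"
    using a b by (simp add: abs_mult powr_mult)
  also have "\<dots> \<le> (a + b) powr q * ((1 - t) * \<bar>x / a\<bar> powr q + t * \<bar>y / b\<bar> powr q)"
    by (intro mult_left_mono abs_convex_comb_powr_le[OF q t(1,2)]) auto
  also have "\<dots> = (a + b) powr q * (a / (a + b) * (\<bar>x\<bar> powr q / a powr q) + b / (a + b) * (\<bar>y\<bar> powr q / b powr q))"
    using a b unfolding t(3) by (simp add: t_def powr_divide)
  finally show ?thesis .
qed

lemma minkowski_weighted_nn_integral:
  fixes q a b :: real and N :: "'a measure" and I :: "'i set" and w :: "'i \<Rightarrow> real"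
    and f g :: "'i \<Rightarrow> 'a \<Rightarrow> real"
  assumes q: "q \<ge> 1" and a: "a > 0" and b: "b > 0" and I: "finite I" and w: "\<And>s. w s \<ge> 0"
    and f: "\<And>s. s \<in> I \<Longrightarrow> f s \<in> borel_measurable N"
    and g: "\<And>s. s \<in> I \<Longrightarrow> g s \<in> borel_measurable N"
    and f_le: "(\<Sum>s\<in>I. ennreal (w s) * (\<integral>\<^sup>+ x. ennreal (\<bar>f s x\<bar> powr q) \<partial>N)) \<le> ennreal (a powr q)"
    and g_le: "(\<Sum>s\<in>I. ennreal (w s) * (\<integral>\<^sup>+ x. ennreal (\<bar>g s x\<bar> powr q) \<partial>N)) \<le> ennreal (b powr q)"
  shows "(\<Sum>s\<in>I. ennreal (w s) * (\<integral>\<^sup>+ x. ennreal (\<bar>f s x + g s x\<bar> powr q) \<partial>N))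
    \<le> ennreal ((a + b) powr q)"
proof -
  define ca where "ca = (a + b) powr q * (a / (a + b)) / a powr q"
  define cb where "cb = (a + b) powr q * (b / (a + b)) / b powr q"
  have nonneg: "ca \<ge> 0" "cb \<ge> 0"
    using a b by (auto simp: ca_def cb_def)
  have pointwise: "\<bar>x + y\<bar> powr q \<le> ca * \<bar>x\<bar> powr q + cb * \<bar>y\<bar> powr q" for x y
    using abs_add_powr_le[OF q a b, of x y] by (simp add: ca_def cb_def field_simps)
  let ?F = "\<lambda>s. \<integral>\<^sup>+ x. ennreal (\<bar>f s x\<bar> powr q) \<partial>N"
  let ?G = "\<lambda>s. \<integral>\<^sup>+ x. ennreal (\<bar>g s x\<bar> powr q) \<partial>N"
  have "(\<Sum>s\<in>I. ennreal (w s) * (\<integral>\<^sup>+ x. ennreal (\<bar>f s x + g s x\<bar> powr q) \<partial>N))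
      \<le> (\<Sum>s\<in>I. ennreal (w s) * (\<integral>\<^sup>+ x. ennreal ca * ennreal (\<bar>f s x\<bar> powr q)
            + ennreal cb * ennreal (\<bar>g s x\<bar> powr q) \<partial>N))"
    using pointwise nonneg
    by (intro sum_mono mult_left_mono nn_integral_mono)
      (simp_all add: ennreal_mult[symmetric] ennreal_plus[symmetric] del: ennreal_plus)
  also have "\<dots> = ennreal ca * (\<Sum>s\<in>I. ennreal (w s) * ?F s) + ennreal cb * (\<Sum>s\<in>I. ennreal (w s) * ?G s)"
    using f g
    by (simp add: nn_integral_cmult nn_integral_add sum_distrib_left sum.distrib algebra_simps
        cong: sum.cong)
  also have "\<dots> \<le> ennreal ca * ennreal (a powr q) + ennreal cb * ennreal (b powr q)"
    by (intro add_mono mult_left_mono f_le g_le) auto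
  also have "\<dots> = ennreal (ca * a powr q + cb * b powr q)"
    using nonneg by (simp add: ennreal_mult[symmetric] ennreal_plus[symmetric] del: ennreal_plus)
  also have "ca * a powr q + cb * b powr q = (a + b) powr q"
  proof -
    have "ca * a powr q + cb * b powr q = ((a + b) powr q * a + (a + b) powr q * b) / (a + b)"
      using a b by (simp add: ca_def cb_def add_divide_distrib)
    also have "\<dots> = (a + b) powr q"
      using a b by (simp add: distrib_left[symmetric])
    finally show ?thesis .
  qed
  finally show ?thesis .
qed

lemma root_le_add_roots_of_powr_bounds:
  fixes q D V R :: real
  assumes q: "q > 0" and D: "D \<ge> 0" and V: "V \<ge> 0" and R: "R \<ge> 0"
    and bound: "\<And>a b. a > 0 \<Longrightarrow> b > 0 \<Longrightarrow> V \<le> a powr q \<Longrightarrow> R \<le> b powr q \<Longrightarrow> D \<le> (a + b) powr q"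
  shows "D powr (1 / q) \<le> V powr (1 / q) + R powr (1 / q)"
proof (rule field_le_epsilon)
  fix e :: real assume e: "e > 0"
  define a where "a = V powr (1 / q) + e / 2"
  define b where "b = R powr (1 / q) + e / 2"
  have ab: "a > 0" "b > 0" using e by (auto simp: a_def b_def add_nonneg_pos)
  have "V \<le> a powr q"
    using powr_le_powr_iff[OF q, of "V powr (1 / q)" a] ab e
    by (simp add: powr_inverse_powr[OF q V] a_def)
  moreover have "R \<le> b powr q"
    using powr_le_powr_iff[OF q, of "R powr (1 / q)" b] ab e
    by (simp add: powr_inverse_powr[OF q R] b_def)
  ultimately have "D \<le> (a + b) powr q" using bound ab by blast
  then have "D powr (1 / q) \<le> a + b"
    using powr_le_powr_iff[OF q, of "D powr (1 / q)" "a + b"] ab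
    by (simp add: powr_inverse_powr[OF q D])
  then show "D powr (1 / q) \<le> V powr (1 / q) + R powr (1 / q) + e"
    by (simp add: a_def b_def)
qed

lemma ennreal_less_top_le_powr:
  fixes X :: ennreal and q :: real
  assumes "X < \<infinity>" "q > 0"
  obtains a where "a > 0" "X \<le> ennreal (a powr q)"
proof
  define r where "r = enn2real X + 1"
  have r: "r > 0" by (simp add: r_def add_nonneg_pos)
  then show "r powr (1 / q) > 0" by simp
  have "X = ennreal (enn2real X)"
    using assms(1) by simp
  also have "\<dots> \<le> ennreal r"
    by (rule ennreal_leI) (simp add: r_def)
  finally have "X \<le> ennreal r" .
  then show "X \<le> ennreal ((r powr (1 / q)) powr q)"
    using r by (simp add: powr_inverse_powr[OF assms(2)])
qed

lemma le_ennreal_of_enn2real_le: "x \<noteq> \<top> \<Longrightarrow> enn2real x \<le> r \<Longrightarrow> x \<le> ennreal r"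
  by (metis ennreal_enn2real_if ennreal_leI)

lemma sum_mult_nn_integral:
  assumes "finite I" "\<And>s. s \<in> I \<Longrightarrow> F s \<in> borel_measurable L"
  shows "(\<Sum>s\<in>I. ennreal (w s) * (\<integral>\<^sup>+ u. F s u \<partial>L)) = (\<integral>\<^sup>+ u. (\<Sum>s\<in>I. ennreal (w s) * F s u) \<partial>L)"
  using assms by (simp add: nn_integral_sum nn_integral_cmult)

section \<open>Barycentric points\<close>

definition bary_objective :: "(nat \<Rightarrow> real) \<Rightarrow> nat \<Rightarrow> real \<Rightarrow> (nat \<Rightarrow> real) \<Rightarrow> real \<Rightarrow> real" where
  "bary_objective w K q c y = (\<Sum>s\<in>{1..K}. w s * \<bar>c s - y\<bar> powr q)"

text \<open>The least minimiser. Choosing the least one makes the choice monotone in \<open>c\<close>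
  (\<open>bary_point_mono\<close>), which is what makes the barycentric quantile function measurable.\<close>

definition bary_point :: "(nat \<Rightarrow> real) \<Rightarrow> nat \<Rightarrow> real \<Rightarrow> (nat \<Rightarrow> real) \<Rightarrow> real" where
  "bary_point w K q c = Inf {y. \<forall>z. bary_objective w K q c y \<le> bary_objective w K q c z}"

lemma continuous_on_bary_objective: "q > 0 \<Longrightarrow> continuous_on A (bary_objective w K q c)"
  unfolding bary_objective_def by (intro continuous_intros continuous_on_powr') auto

lemma bary_point_cong:
  "(\<And>s. s \<in> {1..K} \<Longrightarrow> c s = c' s) \<Longrightarrow> bary_point w K q c = bary_point w K q c'"
proof -
  assume "\<And>s. s \<in> {1..K} \<Longrightarrow> c s = c' s"
  then have "bary_objective w K q c = bary_objective w K q c'"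
    unfolding bary_objective_def by (intro ext sum.cong) auto
  then show ?thesis by (simp add: bary_point_def)
qed

lemma abs_powr_add_le_endpoints:
  fixes q a b x1 x2 :: real
  assumes q: "q \<ge> 1" and x: "a \<le> x1" "x1 \<le> b" "a \<le> x2" "x2 \<le> b" "x1 + x2 = a + b"
  shows "\<bar>x1\<bar> powr q + \<bar>x2\<bar> powr q \<le> \<bar>a\<bar> powr q + \<bar>b\<bar> powr q"
proof (cases "a = b")
  case True
  then show ?thesis using x by auto
next
  case False
  then have ab: "b - a > 0" using x by simp
  define t where "t = (x1 - a) / (b - a)"
  have t: "0 \<le> t" "t \<le> 1" using x ab by (auto simp: t_def field_simps)
  have "t * (b - a) = x1 - a" using ab by (simp add: t_def)
  then have x1: "x1 = (1 - t) * a + t * b" and x2: "x2 = (1 - (1 - t)) * a + (1 - t) * b"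
    using x(5) by (simp_all add: algebra_simps)
  have "\<bar>x1\<bar> powr q \<le> (1 - t) * \<bar>a\<bar> powr q + t * \<bar>b\<bar> powr q"
    unfolding x1 by (rule abs_convex_comb_powr_le[OF q t])
  moreover have "\<bar>x2\<bar> powr q \<le> (1 - (1 - t)) * \<bar>a\<bar> powr q + (1 - t) * \<bar>b\<bar> powr q"
    unfolding x2 using t by (intro abs_convex_comb_powr_le[OF q]) auto
  ultimately show ?thesis
    by (simp add: algebra_simps)
qed

locale weighted_Lq_cost =
  fixes w :: "nat \<Rightarrow> real" and K :: nat and q :: real
  assumes K: "K \<ge> 1" and nonneg_weights: "\<And>s. w s \<ge> 0"
    and sum_weights: "(\<Sum>s\<in>{1..K}. w s) = 1" and q: "q \<ge> 1"
begin

abbreviation "\<Phi> \<equiv> bary_objective w K q"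

lemma ex_positive_weight: "\<exists>s\<in>{1..K}. w s > 0"
proof (rule ccontr)
  assume "\<not> ?thesis"
  then have "(\<Sum>s\<in>{1..K}. w s) = 0"
    using nonneg_weights by (intro sum.neutral) (metis order.antisym not_le)
  then show False using sum_weights by simp
qed

lemma bary_objective_strict_mono:
  assumes "\<And>s. s \<in> {1..K} \<Longrightarrow> \<bar>c s - p\<bar> < \<bar>c s - y\<bar>"
  shows "\<Phi> c p < \<Phi> c y"
  unfolding bary_objective_def
proof (rule sum_strict_mono_ex1)
  show "\<forall>s\<in>{1..K}. w s * \<bar>c s - p\<bar> powr q \<le> w s * \<bar>c s - y\<bar> powr q"
  proof
    fix s assume "s \<in> {1..K}"
    then have "\<bar>c s - p\<bar> \<le> \<bar>c s - y\<bar>" using assms by (simp add: less_imp_le)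
    then show "w s * \<bar>c s - p\<bar> powr q \<le> w s * \<bar>c s - y\<bar> powr q"
      using q nonneg_weights[of s] by (intro mult_left_mono powr_mono2) auto
  qed
  obtain s where s: "s \<in> {1..K}" "w s > 0" using ex_positive_weight by auto
  have "w s * \<bar>c s - p\<bar> powr q < w s * \<bar>c s - y\<bar> powr q"
    using s assms[OF s(1)] q by (intro mult_strict_left_mono powr_less_mono2) auto
  then show "\<exists>s\<in>{1..K}. w s * \<bar>c s - p\<bar> powr q < w s * \<bar>c s - y\<bar> powr q"
    using s(1) by blast
qed simp

lemma bary_objective_less_outside:
  fixes c :: "nat \<Rightarrow> real"
  defines "lo \<equiv> Min (c ` {1..K})" and "hi \<equiv> Max (c ` {1..K})"
  shows "y < lo \<Longrightarrow> \<Phi> c lo < \<Phi> c y" and "hi < y \<Longrightarrow> \<Phi> c hi < \<Phi> c y"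
proof -
  have bounds: "lo \<le> c s" "c s \<le> hi" if "s \<in> {1..K}" for s
    using that by (auto simp: lo_def hi_def)
  show "\<Phi> c lo < \<Phi> c y" if "y < lo"
    using bounds(1) that by (intro bary_objective_strict_mono) fastforce
  show "\<Phi> c hi < \<Phi> c y" if "hi < y"
    using bounds(2) that by (intro bary_objective_strict_mono) fastforce
qed

lemma bary_minimiser_bounds:
  assumes min: "\<forall>z. \<Phi> c y \<le> \<Phi> c z"
  shows "Min (c ` {1..K}) \<le> y" "y \<le> Max (c ` {1..K})"
  using bary_objective_less_outside[where c = c and y = y] min by (auto simp: not_le[symmetric])

lemma ex_bary_minimiser: "\<exists>y. \<forall>z. \<Phi> c y \<le> \<Phi> c z"
proof -
  define lo where "lo = Min (c ` {1..K})"
  define hi where "hi = Max (c ` {1..K})"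
  have "lo \<le> c 1" "c 1 \<le> hi"
    using K by (auto simp: lo_def hi_def)
  then have "lo \<le> hi" by simp
  then have "{lo..hi} \<noteq> {}" by simp
  moreover have "continuous_on {lo..hi} (\<Phi> c)"
    using q by (intro continuous_on_bary_objective) simp
  ultimately obtain y where y: "y \<in> {lo..hi}" "\<forall>z\<in>{lo..hi}. \<Phi> c y \<le> \<Phi> c z"
    using continuous_attains_inf[OF compact_Icc] by blast
  have "\<Phi> c y \<le> \<Phi> c z" for z
  proof -
    consider "z < lo" | "hi < z" | "z \<in> {lo..hi}"
      by (meson atLeastAtMost_iff not_le)
    then show ?thesis
    proof cases
      case 1
      then show ?thesis
        using y(2)[rule_format, of lo] \<open>lo \<le> hi\<close> bary_objective_less_outside(1)[where c = c and y = z]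
        by (simp add: lo_def)
    next
      case 2
      then show ?thesis
        using y(2)[rule_format, of hi] \<open>lo \<le> hi\<close> bary_objective_less_outside(2)[where c = c and y = z]
        by (simp add: hi_def)
    qed (use y in auto)
  qed
  then show ?thesis by blast
qed

lemma bary_point_least_minimiser:
  shows bary_point_minimal: "\<forall>z. \<Phi> c (bary_point w K q c) \<le> \<Phi> c z"
    and bary_point_least: "\<forall>z. \<Phi> c y \<le> \<Phi> c z \<Longrightarrow> bary_point w K q c \<le> y"
proof -
  define A where "A = {y. \<forall>z. \<Phi> c y \<le> \<Phi> c z}"
  have "A = (\<Inter>z. {y. \<Phi> c y \<le> \<Phi> c z})"
    by (auto simp: A_def)
  then have "closed A"
    using continuous_on_bary_objective[of q UNIV w K c] q
    by (auto intro!: closed_Collect_le continuous_on_const)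
  moreover have bdd: "bdd_below A"
    using bary_minimiser_bounds(1) by (auto simp: A_def bdd_below_def)
  moreover have "A \<noteq> {}"
    using ex_bary_minimiser by (auto simp: A_def)
  ultimately have "Inf A \<in> A"
    using closed_contains_Inf by blast
  then show "\<forall>z. \<Phi> c (bary_point w K q c) \<le> \<Phi> c z"
    by (simp add: A_def bary_point_def)
  show "\<forall>z. \<Phi> c y \<le> \<Phi> c z \<Longrightarrow> bary_point w K q c \<le> y"
    using cInf_lower[OF _ bdd, of y] by (simp add: A_def bary_point_def)
qed

lemma bary_point_mono:
  assumes le: "\<And>s. s \<in> {1..K} \<Longrightarrow> c s \<le> c' s"
  shows "bary_point w K q c \<le> bary_point w K q c'"
proof (rule ccontr)
  define y where "y = bary_point w K q c"
  define y' where "y' = bary_point w K q c'"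
  assume "\<not> bary_point w K q c \<le> bary_point w K q c'"
  then have "y' < y" by (simp add: y_def y'_def)
  then have "\<not> (\<forall>z. \<Phi> c y' \<le> \<Phi> c z)"
    using bary_point_least[of c y'] by (auto simp: y_def)
  then obtain z where "\<Phi> c z < \<Phi> c y'"
    by (auto simp: not_le)
  moreover have "\<Phi> c y \<le> \<Phi> c z"
    using bary_point_minimal[of c] by (simp add: y_def)
  ultimately have strict: "\<Phi> c y < \<Phi> c y'"
    by simp
  \<comment> \<open>submodularity of \<open>(c, y) \<mapsto> |c - y|\<^sup>q\<close>: exchanging \<open>y\<close> and \<open>y'\<close> does not increase the cost\<close>
  have "\<Phi> c y' + \<Phi> c' y \<le> \<Phi> c y + \<Phi> c' y'"
    unfolding bary_objective_def sum.distrib[symmetric]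
  proof (rule sum_mono)
    fix s assume s: "s \<in> {1..K}"
    have "\<bar>c s - y'\<bar> powr q + \<bar>c' s - y\<bar> powr q \<le> \<bar>c s - y\<bar> powr q + \<bar>c' s - y'\<bar> powr q"
      using le[OF s] \<open>y' < y\<close> by (intro abs_powr_add_le_endpoints[OF q]) auto
    then show "w s * \<bar>c s - y'\<bar> powr q + w s * \<bar>c' s - y\<bar> powr q
        \<le> w s * \<bar>c s - y\<bar> powr q + w s * \<bar>c' s - y'\<bar> powr q"
      using nonneg_weights[of s] by (simp add: distrib_left[symmetric] mult_left_mono)
  qed
  moreover have "\<Phi> c' y' \<le> \<Phi> c' y"
    using bary_point_minimal[of c'] by (simp add: y'_def)
  ultimately show False using strict by simp
qed

lemma abs_bary_point_powr_le: "\<bar>bary_point w K q c\<bar> powr q \<le> (\<Sum>s\<in>{1..K}. \<bar>c s\<bar> powr q)"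
proof -
  have ne: "c ` {1..K} \<noteq> {}" using K by auto
  obtain s1 where s1: "s1 \<in> {1..K}" "c s1 = Min (c ` {1..K})" using Min_in[OF _ ne] by auto
  obtain s2 where s2: "s2 \<in> {1..K}" "c s2 = Max (c ` {1..K})" using Max_in[OF _ ne] by auto
  have "c s1 \<le> bary_point w K q c" "bary_point w K q c \<le> c s2"
    using bary_minimiser_bounds[OF bary_point_minimal] s1 s2 by simp_all
  then have "\<bar>bary_point w K q c\<bar> \<le> \<bar>c s1\<bar> \<or> \<bar>bary_point w K q c\<bar> \<le> \<bar>c s2\<bar>"
    by linarith
  then obtain s where s: "s \<in> {1..K}" "\<bar>bary_point w K q c\<bar> \<le> \<bar>c s\<bar>"
    using s1(1) s2(1) by blast
  have "\<bar>bary_point w K q c\<bar> powr q \<le> \<bar>c s\<bar> powr q"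
    using s q by (intro powr_mono2) auto
  also have "\<dots> \<le> (\<Sum>s\<in>{1..K}. \<bar>c s\<bar> powr q)"
    using s by (intro member_le_sum) auto
  finally show ?thesis .
qed

end

section \<open>The fair regression problem\<close>

lemma real_distribution_of_Pq: "\<nu> \<in> Pq q \<Longrightarrow> real_distribution \<nu>"
  by (auto simp: Pq_def real_distribution_def real_distribution_axioms_def)

lemma sum_ennreal_mult:
  "(\<And>s. s \<in> I \<Longrightarrow> w s \<ge> 0) \<Longrightarrow> (\<And>s. s \<in> I \<Longrightarrow> a s \<ge> 0) \<Longrightarrow>
    (\<Sum>s\<in>I. ennreal (w s) * ennreal (a s)) = ennreal (\<Sum>s\<in>I. w s * a s)"
  by (subst sum_ennreal[symmetric]) (auto simp: ennreal_mult intro!: sum.cong)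

locale fair_regression = weighted_Lq_cost w K q for w K q +
  fixes M :: "'a measure" and N :: "'x measure" and X :: "'a \<Rightarrow> 'x" and S :: "'a \<Rightarrow> nat"
    and fstar :: "'x \<Rightarrow> nat \<Rightarrow> real"
  assumes M: "prob_space M" and X: "X \<in> measurable M N"
    and S: "S \<in> measurable M (count_space UNIV)" and S_range: "\<forall>\<omega>\<in>space M. S \<omega> \<in> {1..K}"
    and S_positive: "\<forall>s\<in>{1..K}. measure M {\<omega> \<in> space M. S \<omega> = s} > 0"
    and fstar: "\<forall>s\<in>{1..K}. (\<lambda>x. fstar x s) \<in> borel_measurable N"
    and atomless: "\<forall>s\<in>{1..K}. \<forall>x. measure (cond_law M X S fstar s) {x} = 0"
    and moment: "\<forall>s\<in>{1..K}. (\<integral>\<^sup>+ x. ennreal (\<bar>x\<bar> powr q) \<partial>cond_law M X S fstar s) < \<infinity>"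
begin

abbreviation "cond s \<equiv> cond_meas M S s"
abbreviation "law s \<equiv> cond_law M X S fstar s"

lemma sets_cond [simp, measurable_cong]: "sets (cond s) = sets M"
  by (simp add: cond_meas_def)

lemma S_eq_in_sets [measurable]: "{\<omega> \<in> space M. S \<omega> = s} \<in> sets M"
proof -
  have "{\<omega> \<in> space M. S \<omega> = s} = S -` {s} \<inter> space M" by auto
  then show ?thesis using measurable_sets[OF S, of "{s}"] by simp
qed

lemma prob_space_cond:
  assumes s: "s \<in> {1..K}"
  shows "prob_space (cond s)"
proof -
  interpret prob_space M by (rule M)
  have "measure M {\<omega> \<in> space M. S \<omega> = s} > 0"
    using S_positive s by blast
  then show ?thesis
    unfolding cond_meas_def by (intro prob_space_uniform_measure) (auto simp: emeasure_eq_measure)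
qed

lemma AE_cond_S: "AE \<omega> in cond s. S \<omega> = s"
  unfolding cond_meas_def by (rule AE_uniform_measureI) (auto intro!: AE_I2)

lemma measurable_comp_X:
  assumes "s \<in> {1..K}" "\<forall>s\<in>{1..K}. (\<lambda>x. f x s) \<in> borel_measurable N"
  shows "(\<lambda>\<omega>. f (X \<omega>) s) \<in> borel_measurable M"
proof -
  have "(\<lambda>x. f x s) \<in> borel_measurable N" using assms by blast
  then show ?thesis by (rule measurable_compose[OF X])
qed

lemma measurable_comp_X_S:
  assumes f: "\<forall>s\<in>{1..K}. (\<lambda>x. f x s) \<in> borel_measurable N"
  shows "(\<lambda>\<omega>. f (X \<omega>) (S \<omega>)) \<in> borel_measurable M"
proof -
  have S_K: "S \<in> measurable M (count_space {1..K})"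
    unfolding measurable_count_space_eq2_countable
  proof
    show "S \<in> space M \<rightarrow> {1..K}" using S_range by auto
    show "\<forall>s\<in>{1..K}. S -` {s} \<inter> space M \<in> sets M" using measurable_sets[OF S] by auto
  qed
  have "(\<lambda>\<omega>. (\<lambda>s \<omega>. f (X \<omega>) s) (S \<omega>) \<omega>) \<in> borel_measurable M"
    by (rule measurable_compose_countable'[OF measurable_comp_X[OF _ f] S_K]) simp_all
  then show ?thesis by simp
qed

lemma cond_law_eq_distr:
  assumes s: "s \<in> {1..K}" and f: "\<forall>s\<in>{1..K}. (\<lambda>x. f x s) \<in> borel_measurable N"
  shows "cond_law M X S f s = distr (cond s) borel (\<lambda>\<omega>. f (X \<omega>) s)"
  unfolding cond_law_def
proof (rule distr_cong_AE)
  show "AE \<omega> in cond s. f (X \<omega>) (S \<omega>) = f (X \<omega>) s"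
    using AE_cond_S by eventually_elim simp
  show "(\<lambda>\<omega>. f (X \<omega>) (S \<omega>)) \<in> borel_measurable (cond s)"
    unfolding measurable_cong_sets[OF sets_cond refl] by (rule measurable_comp_X_S[OF f])
  show "(\<lambda>\<omega>. f (X \<omega>) s) \<in> borel_measurable (cond s)"
    unfolding measurable_cong_sets[OF sets_cond refl] by (rule measurable_comp_X[OF s f])
qed simp_all

lemma real_distribution_cond_law:
  assumes s: "s \<in> {1..K}" and f: "\<forall>s\<in>{1..K}. (\<lambda>x. f x s) \<in> borel_measurable N"
  shows "real_distribution (cond_law M X S f s)"
proof -
  interpret prob_space "cond s" by (rule prob_space_cond[OF s])
  show ?thesis
    unfolding cond_law_def using measurable_comp_X_S[OF f]
    by (intro real_distribution_distr) (simp add: measurable_cong_sets[OF sets_cond refl])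
qed

lemma real_distribution_law: "s \<in> {1..K} \<Longrightarrow> real_distribution (law s)"
  using real_distribution_cond_law fstar by blast

lemma measurable_quantile_law: "s \<in> {1..K} \<Longrightarrow> quantile (law s) \<in> borel_measurable lebesgue_01"
  using real_distribution.measurable_quantile[OF real_distribution_law] .

lemma cdf_quantile_law: "s \<in> {1..K} \<Longrightarrow> u \<in> {0<..<1} \<Longrightarrow> cdf (law s) (quantile (law s) u) = u"
  using real_distribution.cdf_quantile[OF real_distribution_law] atomless by auto

lemma nn_integral_cond_fstar:
  assumes s: "s \<in> {1..K}" and H: "H \<in> borel_measurable borel"
  shows "(\<integral>\<^sup>+ \<omega>. H (fstar (X \<omega>) s) \<partial>cond s) = (\<integral>\<^sup>+ u. H (quantile (law s) u) \<partial>lebesgue_01)"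
proof -
  have fs: "(\<lambda>\<omega>. fstar (X \<omega>) s) \<in> borel_measurable (cond s)"
    unfolding measurable_cong_sets[OF sets_cond refl] by (rule measurable_comp_X[OF s fstar])
  have "(\<integral>\<^sup>+ \<omega>. H (fstar (X \<omega>) s) \<partial>cond s) = (\<integral>\<^sup>+ x. H x \<partial>law s)"
    using nn_integral_distr[OF fs, of H] H by (simp add: cond_law_eq_distr[OF s fstar])
  also have "\<dots> = (\<integral>\<^sup>+ u. H (quantile (law s) u) \<partial>lebesgue_01)"
    by (rule real_distribution.nn_integral_quantile[OF real_distribution_law[OF s] H, symmetric])
  finally show ?thesis .
qed

lemma distr_cond_fstar:
  assumes s: "s \<in> {1..K}" and G: "G \<in> borel_measurable borel"
  shows "distr (cond s) borel (\<lambda>\<omega>. G (fstar (X \<omega>) s))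
    = distr lebesgue_01 borel (\<lambda>u. G (quantile (law s) u))"
proof -
  have fs: "(\<lambda>\<omega>. fstar (X \<omega>) s) \<in> borel_measurable (cond s)"
    unfolding measurable_cong_sets[OF sets_cond refl] by (rule measurable_comp_X[OF s fstar])
  have "distr (cond s) borel (\<lambda>\<omega>. G (fstar (X \<omega>) s)) = distr (law s) borel G"
    by (simp add: cond_law_eq_distr[OF s fstar] distr_distr[OF G fs] comp_def)
  also have "\<dots> = distr (distr lebesgue_01 borel (quantile (law s))) borel G"
    by (simp add: real_distribution.distr_quantile[OF real_distribution_law[OF s]])
  also have "\<dots> = distr lebesgue_01 borel (\<lambda>u. G (quantile (law s) u))"
    by (simp add: distr_distr[OF G measurable_quantile_law[OF s]] comp_def)
  finally show ?thesis .
qed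

definition bary_quantile :: "real \<Rightarrow> real" where
  "bary_quantile u = bary_point w K q (\<lambda>s. quantile (law s) u)"

definition barycenter :: "real measure" where
  "barycenter = distr lebesgue_01 borel bary_quantile"

definition bary_cost :: ennreal where
  "bary_cost = (\<Sum>s\<in>{1..K}. ennreal (w s) *
     (\<integral>\<^sup>+ u. ennreal (\<bar>quantile (law s) u - bary_quantile u\<bar> powr q) \<partial>lebesgue_01))"

lemma mono_on_bary_quantile: "mono_on {0<..<1} bary_quantile"
proof (rule mono_onI)
  fix u v :: real assume "u \<in> {0<..<1}" "v \<in> {0<..<1}" "u \<le> v"
  then show "bary_quantile u \<le> bary_quantile v"
    unfolding bary_quantile_def
    by (intro bary_point_mono mono_onD[OF real_distribution.mono_on_quantile[OF real_distribution_law]])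
qed

text \<open>\<open>quantile\<close> is an infimum also outside \<open>(0, 1)\<close>, where it takes junk values; only three of
  them occur, which is enough for measurability on the whole line.\<close>

lemma bary_quantile_outside:
  assumes "u \<notin> {0<..<1}"
  shows "bary_quantile u
    = (if u \<le> 0 then bary_quantile 0 else if u = 1 then bary_quantile 1 else bary_quantile 2)"
proof -
  have "u \<le> 0 \<Longrightarrow> bary_quantile u = bary_quantile 0" "1 < u \<Longrightarrow> bary_quantile u = bary_quantile 2"
    unfolding bary_quantile_def
    by (intro bary_point_cong real_distribution.quantile_nonpos real_distribution.quantile_gt_one
        real_distribution_law; assumption)+
  then show ?thesis using assms by auto
qed

lemma borel_measurable_bary_quantile [measurable]: "bary_quantile \<in> borel_measurable borel"
proof -
  have "{u. u \<in> {0<..<1::real}} = {0<..<1}" by auto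
  then have "bary_quantile \<in> borel_measurable (restrict_space borel {u. u \<in> {0<..<1}})"
    using borel_measurable_mono_on_fnc[OF mono_on_bary_quantile] by simp
  moreover have "(\<lambda>u::real. if u \<le> 0 then bary_quantile 0 else if u = 1 then bary_quantile 1
      else bary_quantile 2) \<in> borel_measurable borel"
    by measurable
  then have "(\<lambda>u::real. if u \<le> 0 then bary_quantile 0 else if u = 1 then bary_quantile 1
      else bary_quantile 2) \<in> borel_measurable (restrict_space borel {u. u \<notin> {0<..<1}})"
    by (rule measurable_restrict_space1)
  ultimately have "(\<lambda>u. if u \<in> {0<..<1} then bary_quantile u
      else (if u \<le> 0 then bary_quantile 0 else if u = 1 then bary_quantile 1 else bary_quantile 2)) \<in> borel_measurable borel"
    by (subst measurable_If_restrict_space_iff) auto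
  moreover have "(\<lambda>u. if u \<in> {0<..<1} then bary_quantile u
      else (if u \<le> 0 then bary_quantile 0 else if u = 1 then bary_quantile 1 else bary_quantile 2)) = bary_quantile"
    using bary_quantile_outside by (auto simp del: greaterThanLessThan_iff)
  ultimately show ?thesis by simp
qed

lemma measurable_bary_quantile_lebesgue_01 [measurable]:
  "bary_quantile \<in> borel_measurable lebesgue_01"
  by (rule borel_measurable_lebesgue_01) measurable

lemma barycenter_in_Pq: "barycenter \<in> Pq q"
proof -
  interpret prob_space lebesgue_01 by (rule prob_space_lebesgue_01)
  have "(\<integral>\<^sup>+ x. ennreal (\<bar>x\<bar> powr q) \<partial>barycenter) = (\<integral>\<^sup>+ u. ennreal (\<bar>bary_quantile u\<bar> powr q) \<partial>lebesgue_01)"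
    unfolding barycenter_def by (rule nn_integral_distr) simp_all
  also have "\<dots> \<le> (\<integral>\<^sup>+ u. (\<Sum>s\<in>{1..K}. ennreal (\<bar>quantile (law s) u\<bar> powr q)) \<partial>lebesgue_01)"
  proof (rule nn_integral_mono)
    fix u
    show "ennreal (\<bar>bary_quantile u\<bar> powr q) \<le> (\<Sum>s\<in>{1..K}. ennreal (\<bar>quantile (law s) u\<bar> powr q))"
      using abs_bary_point_powr_le[of "\<lambda>s. quantile (law s) u"]
      unfolding bary_quantile_def by (simp add: ennreal_leI)
  qed
  also have "\<dots> = (\<Sum>s\<in>{1..K}. (\<integral>\<^sup>+ u. ennreal (\<bar>quantile (law s) u\<bar> powr q) \<partial>lebesgue_01))"
  proof (rule nn_integral_sum)
    fix s assume "s \<in> {1..K}"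
    note [measurable] = measurable_quantile_law[OF this]
    show "(\<lambda>u. ennreal (\<bar>quantile (law s) u\<bar> powr q)) \<in> borel_measurable lebesgue_01"
      by measurable
  qed
  also have "\<dots> = (\<Sum>s\<in>{1..K}. (\<integral>\<^sup>+ x. ennreal (\<bar>x\<bar> powr q) \<partial>law s))"
    by (intro sum.cong refl real_distribution.nn_integral_quantile[OF real_distribution_law]) simp_all
  also have "\<dots> < \<infinity>"
    using moment by (simp add: sum_Pinfty less_top)
  finally have "(\<integral>\<^sup>+ x. ennreal (\<bar>x\<bar> powr q) \<partial>barycenter) < \<infinity>" .
  moreover have "prob_space barycenter"
    unfolding barycenter_def by (rule prob_space_distr) simp
  ultimately show ?thesis by (simp add: Pq_def barycenter_def)
qed

lemma borel_measurable_cdf_law: "s \<in> {1..K} \<Longrightarrow> cdf (law s) \<in> borel_measurable borel"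
  using cdf_distribution.measurable_C real_distribution.cdf_distribution real_distribution_law
  by blast

lemma unfair_fstar_le_bary_cost: "unfair_q M X S K w q fstar \<le> bary_cost"
  unfolding unfair_q_def bary_cost_def
proof (rule INF_lower2[OF barycenter_in_Pq], intro sum_mono mult_left_mono)
  fix s assume s: "s \<in> {1..K}"
  show "Wq_pow q (law s) barycenter
      \<le> (\<integral>\<^sup>+ u. ennreal (\<bar>quantile (law s) u - bary_quantile u\<bar> powr q) \<partial>lebesgue_01)"
    by (rule Wq_pow_le_nn_integral[OF prob_space_lebesgue_01 measurable_quantile_law[OF s]
          measurable_bary_quantile_lebesgue_01 real_distribution.distr_quantile[OF real_distribution_law[OF s]]])
      (simp add: barycenter_def)
qed simp

lemma bary_cost_le_unfair_fstar: "bary_cost \<le> unfair_q M X S K w q fstar"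
  unfolding unfair_q_def
proof (rule INF_greatest)
  fix \<nu> assume \<nu>: "\<nu> \<in> Pq q"
  note [measurable] = real_distribution.measurable_quantile[OF real_distribution_of_Pq[OF \<nu>]]
    measurable_quantile_law
  have "bary_cost = (\<integral>\<^sup>+ u. (\<Sum>s\<in>{1..K}. ennreal (w s) *
      ennreal (\<bar>quantile (law s) u - bary_quantile u\<bar> powr q)) \<partial>lebesgue_01)"
    unfolding bary_cost_def by (intro sum_mult_nn_integral) simp_all
  also have "\<dots> \<le> (\<integral>\<^sup>+ u. (\<Sum>s\<in>{1..K}. ennreal (w s) *
      ennreal (\<bar>quantile (law s) u - quantile \<nu> u\<bar> powr q)) \<partial>lebesgue_01)"
  proof (rule nn_integral_mono)
    fix u
    have "bary_objective w K q (\<lambda>s. quantile (law s) u) (bary_quantile u)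
        \<le> bary_objective w K q (\<lambda>s. quantile (law s) u) (quantile \<nu> u)"
      using bary_point_minimal unfolding bary_quantile_def by blast
    then show "(\<Sum>s\<in>{1..K}. ennreal (w s) * ennreal (\<bar>quantile (law s) u - bary_quantile u\<bar> powr q))
        \<le> (\<Sum>s\<in>{1..K}. ennreal (w s) * ennreal (\<bar>quantile (law s) u - quantile \<nu> u\<bar> powr q))"
      using nonneg_weights by (simp add: bary_objective_def sum_ennreal_mult ennreal_leI)
  qed
  also have "\<dots> = (\<Sum>s\<in>{1..K}. ennreal (w s) * Wq_pow q (law s) \<nu>)"
    using real_distribution_law real_distribution_of_Pq[OF \<nu>]
    by (subst sum_mult_nn_integral[symmetric]) (simp_all add: Wq_pow_eq_quantile_coupling[OF q])
  finally show "bary_cost \<le> (\<Sum>s\<in>{1..K}. ennreal (w s) * Wq_pow q (law s) \<nu>)" .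
qed

lemma unfair_fstar_eq: "unfair_q M X S K w q fstar = bary_cost"
  using unfair_fstar_le_bary_cost bary_cost_le_unfair_fstar by (rule antisym)

lemma bary_cost_finite: "bary_cost < \<infinity>"
proof -
  have q0: "q > 0" using q by simp
  note [measurable] = measurable_quantile_law
  have "(\<integral>\<^sup>+ u. ennreal (\<bar>quantile (law s) u\<bar> powr q) \<partial>lebesgue_01) < \<infinity>" if s: "s \<in> {1..K}" for s
    using real_distribution.nn_integral_quantile[OF real_distribution_law[OF s],
        of "\<lambda>x. ennreal (\<bar>x\<bar> powr q)"] moment s by simp
  then have "(\<Sum>s\<in>{1..K}. ennreal (w s) * (\<integral>\<^sup>+ u. ennreal (\<bar>quantile (law s) u\<bar> powr q) \<partial>lebesgue_01)) < \<infinity>"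
    by (simp add: sum_Pinfty less_top[symmetric] ennreal_mult_eq_top_iff)
  then obtain a where a: "a > 0"
    "(\<Sum>s\<in>{1..K}. ennreal (w s) * (\<integral>\<^sup>+ u. ennreal (\<bar>quantile (law s) u\<bar> powr q) \<partial>lebesgue_01))
      \<le> ennreal (a powr q)"
    using ennreal_less_top_le_powr[OF _ q0] by blast
  have "(\<integral>\<^sup>+ u. ennreal (\<bar>- bary_quantile u\<bar> powr q) \<partial>lebesgue_01) = (\<integral>\<^sup>+ x. ennreal (\<bar>x\<bar> powr q) \<partial>barycenter)"
    unfolding barycenter_def by (subst nn_integral_distr) simp_all
  also have "\<dots> < \<infinity>"
    using barycenter_in_Pq by (simp add: Pq_def)
  finally have "(\<Sum>s\<in>{1..K}. ennreal (w s) * (\<integral>\<^sup>+ u. ennreal (\<bar>- bary_quantile u\<bar> powr q) \<partial>lebesgue_01)) < \<infinity>"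
    by (simp add: sum_Pinfty less_top[symmetric] ennreal_mult_eq_top_iff)
  then obtain b where b: "b > 0"
    "(\<Sum>s\<in>{1..K}. ennreal (w s) * (\<integral>\<^sup>+ u. ennreal (\<bar>- bary_quantile u\<bar> powr q) \<partial>lebesgue_01))
      \<le> ennreal (b powr q)"
    using ennreal_less_top_le_powr[OF _ q0] by blast
  have "bary_cost \<le> ennreal ((a + b) powr q)"
    using minkowski_weighted_nn_integral[OF q a(1) b(1) _ nonneg_weights _ _ a(2) b(2)]
    by (simp add: bary_cost_def)
  then show ?thesis by (simp add: le_less_trans)
qed

definition bary_map :: "'x \<Rightarrow> nat \<Rightarrow> real" where
  "bary_map x s = bary_quantile (cdf (law s) (fstar x s))"

lemma measurable_bary_map: "\<forall>s\<in>{1..K}. (\<lambda>x. bary_map x s) \<in> borel_measurable N"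
  unfolding bary_map_def
  using fstar borel_measurable_cdf_law by (auto intro: measurable_compose)

lemma bary_map_is_arg_min:
  "is_arg_min (\<lambda>y. \<Sum>s'\<in>{1..K}. w s' * \<bar>quantile (law s') (cdf (law s) (fstar x s)) - y\<bar> powr q)
     (\<lambda>_. True) (bary_map x s)"
  using bary_point_minimal
  unfolding is_arg_min_def bary_map_def bary_quantile_def bary_objective_def by (auto simp: not_less)

text \<open>Atomlessness makes \<open>cdf (law s) \<circ> quantile (law s)\<close> the identity on \<open>(0, 1)\<close>, so \<open>bary_map\<close>
  moves \<open>f\<^sup>*\<close> along the quantile coupling of \<open>law s\<close> and the barycentre.\<close>

lemma nn_integral_cond_bary_map:
  assumes s: "s \<in> {1..K}"
    and H: "(\<lambda>z. H (fst z) (snd z)) \<in> borel_measurable (borel \<Otimes>\<^sub>M borel)"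
  shows "(\<integral>\<^sup>+ \<omega>. H (fstar (X \<omega>) (S \<omega>)) (bary_map (X \<omega>) (S \<omega>)) \<partial>cond s)
    = (\<integral>\<^sup>+ u. H (quantile (law s) u) (bary_quantile u) \<partial>lebesgue_01)"
proof -
  note [measurable] = borel_measurable_cdf_law[OF s]
  have "AE \<omega> in cond s. H (fstar (X \<omega>) (S \<omega>)) (bary_map (X \<omega>) (S \<omega>))
      = H (fstar (X \<omega>) s) (bary_quantile (cdf (law s) (fstar (X \<omega>) s)))"
    using AE_cond_S[of s] by eventually_elim (simp add: bary_map_def)
  then have "(\<integral>\<^sup>+ \<omega>. H (fstar (X \<omega>) (S \<omega>)) (bary_map (X \<omega>) (S \<omega>)) \<partial>cond s)
      = (\<integral>\<^sup>+ \<omega>. H (fstar (X \<omega>) s) (bary_quantile (cdf (law s) (fstar (X \<omega>) s))) \<partial>cond s)"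
    by (rule nn_integral_cong_AE)
  also have "\<dots> = (\<integral>\<^sup>+ u. H (quantile (law s) u) (bary_quantile (cdf (law s) (quantile (law s) u))) \<partial>lebesgue_01)"
    using measurable_compose[OF _ H, of "\<lambda>x. (x, bary_quantile (cdf (law s) x))"]
    by (intro nn_integral_cond_fstar[OF s]) simp
  also have "\<dots> = (\<integral>\<^sup>+ u. H (quantile (law s) u) (bary_quantile u) \<partial>lebesgue_01)"
    by (rule nn_integral_cong) (simp add: cdf_quantile_law[OF s])
  finally show ?thesis .
qed

definition interpolant :: "real \<Rightarrow> 'x \<Rightarrow> nat \<Rightarrow> real" where
  "interpolant t x s = t * fstar x s + (1 - t) * bary_map x s"

lemma measurable_interpolant: "\<forall>s\<in>{1..K}. (\<lambda>x. interpolant t x s) \<in> borel_measurable N"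
proof
  fix s assume "s \<in> {1..K}"
  then have [measurable]: "(\<lambda>x. fstar x s) \<in> borel_measurable N" "(\<lambda>x. bary_map x s) \<in> borel_measurable N"
    using fstar measurable_bary_map by auto
  show "(\<lambda>x. interpolant t x s) \<in> borel_measurable N"
    unfolding interpolant_def by measurable
qed

lemma risk_interpolant:
  assumes t: "t \<le> 1"
  shows "risk_q M X S K w q fstar (interpolant t) = ennreal ((1 - t) powr q) * bary_cost"
proof -
  have pointwise: "\<bar>interpolant t x s - fstar x s\<bar> powr q = (1 - t) powr q * \<bar>fstar x s - bary_map x s\<bar> powr q"
    for x s
  proof -
    have "interpolant t x s - fstar x s = (1 - t) * (bary_map x s - fstar x s)"
      by (simp add: interpolant_def algebra_simps)
    then show ?thesis
      using t by (simp add: abs_mult powr_mult abs_minus_commute)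
  qed
  have "(\<integral>\<^sup>+ \<omega>. ennreal (\<bar>interpolant t (X \<omega>) (S \<omega>) - fstar (X \<omega>) (S \<omega>)\<bar> powr q) \<partial>cond s)
      = ennreal ((1 - t) powr q) * (\<integral>\<^sup>+ u. ennreal (\<bar>quantile (law s) u - bary_quantile u\<bar> powr q) \<partial>lebesgue_01)"
    if s: "s \<in> {1..K}" for s
  proof -
    have [measurable]: "(\<lambda>\<omega>. fstar (X \<omega>) (S \<omega>)) \<in> borel_measurable (cond s)"
      "(\<lambda>\<omega>. bary_map (X \<omega>) (S \<omega>)) \<in> borel_measurable (cond s)"
      using measurable_comp_X_S[OF fstar] measurable_comp_X_S[OF measurable_bary_map]
      by (simp_all add: measurable_cong_sets[OF sets_cond refl])
    have "(\<integral>\<^sup>+ \<omega>. ennreal (\<bar>interpolant t (X \<omega>) (S \<omega>) - fstar (X \<omega>) (S \<omega>)\<bar> powr q) \<partial>cond s)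
        = (\<integral>\<^sup>+ \<omega>. ennreal ((1 - t) powr q) *
            ennreal (\<bar>fstar (X \<omega>) (S \<omega>) - bary_map (X \<omega>) (S \<omega>)\<bar> powr q) \<partial>cond s)"
      using t by (simp add: pointwise ennreal_mult)
    also have "\<dots> = ennreal ((1 - t) powr q) *
        (\<integral>\<^sup>+ \<omega>. ennreal (\<bar>fstar (X \<omega>) (S \<omega>) - bary_map (X \<omega>) (S \<omega>)\<bar> powr q) \<partial>cond s)"
      by (rule nn_integral_cmult) measurable
    also have "\<dots> = ennreal ((1 - t) powr q) *
        (\<integral>\<^sup>+ u. ennreal (\<bar>quantile (law s) u - bary_quantile u\<bar> powr q) \<partial>lebesgue_01)"
      by (subst nn_integral_cond_bary_map[OF s, where H = "\<lambda>a b. ennreal (\<bar>a - b\<bar> powr q)"]) simp_all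
    finally show ?thesis .
  qed
  then show ?thesis
    unfolding risk_q_def bary_cost_def sum_distrib_left by (simp add: mult_ac)
qed

lemma cond_law_interpolant:
  assumes s: "s \<in> {1..K}"
  shows "cond_law M X S (interpolant t) s
    = distr lebesgue_01 borel (\<lambda>u. t * quantile (law s) u + (1 - t) * bary_quantile u)"
proof -
  note [measurable] = borel_measurable_cdf_law[OF s]
  have "cond_law M X S (interpolant t) s
      = distr (cond s) borel (\<lambda>\<omega>. t * fstar (X \<omega>) s + (1 - t) * bary_quantile (cdf (law s) (fstar (X \<omega>) s)))"
    by (simp add: cond_law_eq_distr[OF s measurable_interpolant] interpolant_def bary_map_def)
  also have "\<dots> = distr lebesgue_01 borel
      (\<lambda>u. t * quantile (law s) u + (1 - t) * bary_quantile (cdf (law s) (quantile (law s) u)))"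
    by (rule distr_cond_fstar[OF s, where G = "\<lambda>x. t * x + (1 - t) * bary_quantile (cdf (law s) x)"])
      measurable
  also have "\<dots> = distr lebesgue_01 borel (\<lambda>u. t * quantile (law s) u + (1 - t) * bary_quantile u)"
    by (rule distr_cong) (simp_all add: cdf_quantile_law[OF s])
  finally show ?thesis .
qed

lemma unfair_interpolant_le:
  assumes t: "0 \<le> t"
  shows "unfair_q M X S K w q (interpolant t) \<le> ennreal (t powr q) * bary_cost"
  unfolding unfair_q_def
proof (rule INF_lower2[OF barycenter_in_Pq])
  have "Wq_pow q (cond_law M X S (interpolant t) s) barycenter
      \<le> ennreal (t powr q) * (\<integral>\<^sup>+ u. ennreal (\<bar>quantile (law s) u - bary_quantile u\<bar> powr q) \<partial>lebesgue_01)"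
    if s: "s \<in> {1..K}" for s
  proof -
    note [measurable] = measurable_quantile_law[OF s]
    have "\<bar>(t * quantile (law s) u + (1 - t) * bary_quantile u) - bary_quantile u\<bar> powr q
        = t powr q * \<bar>quantile (law s) u - bary_quantile u\<bar> powr q" for u
    proof -
      have "(t * quantile (law s) u + (1 - t) * bary_quantile u) - bary_quantile u
          = t * (quantile (law s) u - bary_quantile u)"
        by (simp add: algebra_simps)
      then show ?thesis using t by (simp add: abs_mult powr_mult)
    qed
    moreover have "Wq_pow q (cond_law M X S (interpolant t) s) barycenter
        \<le> (\<integral>\<^sup>+ u. ennreal (\<bar>(t * quantile (law s) u + (1 - t) * bary_quantile u) - bary_quantile u\<bar> powr q)
            \<partial>lebesgue_01)"
      by (rule Wq_pow_le_nn_integral[OF prob_space_lebesgue_01])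
        (simp_all add: cond_law_interpolant[OF s] barycenter_def)
    ultimately show ?thesis
      by (simp add: ennreal_mult nn_integral_cmult)
  qed
  then have "(\<Sum>s\<in>{1..K}. ennreal (w s) * Wq_pow q (cond_law M X S (interpolant t) s) barycenter)
      \<le> (\<Sum>s\<in>{1..K}. ennreal (w s) * (ennreal (t powr q) *
          (\<integral>\<^sup>+ u. ennreal (\<bar>quantile (law s) u - bary_quantile u\<bar> powr q) \<partial>lebesgue_01)))"
    by (intro sum_mono mult_left_mono) simp_all
  also have "\<dots> = ennreal (t powr q) * bary_cost"
    unfolding bary_cost_def by (simp add: sum_distrib_left mult_ac)
  finally show "(\<Sum>s\<in>{1..K}. ennreal (w s) * Wq_pow q (cond_law M X S (interpolant t) s) barycenter)
      \<le> ennreal (t powr q) * bary_cost" .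
qed

lemma sum_Wq_pow_cond_law_le_risk:
  assumes f: "\<forall>s\<in>{1..K}. (\<lambda>x. f x s) \<in> borel_measurable N"
  shows "(\<Sum>s\<in>{1..K}. ennreal (w s) * Wq_pow q (law s) (cond_law M X S f s))
    \<le> risk_q M X S K w q fstar f"
  unfolding risk_q_def
proof (intro sum_mono mult_left_mono)
  fix s assume s: "s \<in> {1..K}"
  have "Wq_pow q (law s) (cond_law M X S f s)
      \<le> (\<integral>\<^sup>+ \<omega>. ennreal (\<bar>fstar (X \<omega>) (S \<omega>) - f (X \<omega>) (S \<omega>)\<bar> powr q) \<partial>cond s)"
    using measurable_comp_X_S[OF fstar] measurable_comp_X_S[OF f]
    by (intro Wq_pow_le_nn_integral[OF prob_space_cond[OF s]])
      (simp_all add: cond_law_def measurable_cong_sets[OF sets_cond refl])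
  then show "Wq_pow q (law s) (cond_law M X S f s)
      \<le> (\<integral>\<^sup>+ \<omega>. ennreal (\<bar>f (X \<omega>) (S \<omega>) - fstar (X \<omega>) (S \<omega>)\<bar> powr q) \<partial>cond s)"
    by (simp add: abs_minus_commute)
qed simp

text \<open>Minkowski's inequality for \<open>Q\<^sub>s - Q\<^sub>\<nu> = (Q\<^sub>s\<^sup>f - Q\<^sub>\<nu>) + (Q\<^sub>s - Q\<^sub>s\<^sup>f)\<close>, where \<open>Q\<^sub>s\<close>, \<open>Q\<^sub>s\<^sup>f\<close>, \<open>Q\<^sub>\<nu>\<close> are the
  quantile functions of \<open>law s\<close>, of the law of \<open>f\<close> given \<open>S = s\<close>, and of \<open>\<nu>\<close>.\<close>

lemma bary_cost_le_of_powr_bounds: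
  assumes f: "\<forall>s\<in>{1..K}. (\<lambda>x. f x s) \<in> borel_measurable N" and \<nu>: "\<nu> \<in> Pq q"
    and a: "a > 0" and b: "b > 0"
    and unfair_le: "(\<Sum>s\<in>{1..K}. ennreal (w s) * Wq_pow q (cond_law M X S f s) \<nu>) \<le> ennreal (a powr q)"
    and risk_le: "risk_q M X S K w q fstar f \<le> ennreal (b powr q)"
  shows "bary_cost \<le> ennreal ((a + b) powr q)"
proof -
  have \<nu>_distr: "real_distribution \<nu>" by (rule real_distribution_of_Pq[OF \<nu>])
  have f_distr: "real_distribution (cond_law M X S f s)" if "s \<in> {1..K}" for s
    using real_distribution_cond_law[OF that f] .
  note [measurable] = real_distribution.measurable_quantile[OF \<nu>_distr]
    real_distribution.measurable_quantile[OF f_distr] measurable_quantile_law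
  have "bary_cost \<le> (\<Sum>s\<in>{1..K}. ennreal (w s) * Wq_pow q (law s) \<nu>)"
    unfolding unfair_fstar_eq[symmetric] unfair_q_def by (rule INF_lower[OF \<nu>])
  also have "\<dots> = (\<Sum>s\<in>{1..K}. ennreal (w s) * (\<integral>\<^sup>+ u. ennreal (\<bar>
      (quantile (cond_law M X S f s) u - quantile \<nu> u)
      + (quantile (law s) u - quantile (cond_law M X S f s) u)\<bar> powr q) \<partial>lebesgue_01))"
    by (intro sum.cong refl) (simp add: Wq_pow_eq_quantile_coupling[OF q real_distribution_law \<nu>_distr])
  also have "\<dots> \<le> ennreal ((a + b) powr q)"
  proof (rule minkowski_weighted_nn_integral[OF q a b _ nonneg_weights])
    show "(\<Sum>s\<in>{1..K}. ennreal (w s) * (\<integral>\<^sup>+ u. ennreal (\<bar>quantile (cond_law M X S f s) u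
        - quantile \<nu> u\<bar> powr q) \<partial>lebesgue_01)) \<le> ennreal (a powr q)"
    proof -
      have "(\<Sum>s\<in>{1..K}. ennreal (w s) * (\<integral>\<^sup>+ u. ennreal (\<bar>quantile (cond_law M X S f s) u
          - quantile \<nu> u\<bar> powr q) \<partial>lebesgue_01))
          = (\<Sum>s\<in>{1..K}. ennreal (w s) * Wq_pow q (cond_law M X S f s) \<nu>)"
        by (intro sum.cong refl) (simp add: Wq_pow_eq_quantile_coupling[OF q f_distr \<nu>_distr])
      then show ?thesis using unfair_le by simp
    qed
    have "(\<Sum>s\<in>{1..K}. ennreal (w s) * (\<integral>\<^sup>+ u. ennreal (\<bar>quantile (law s) u
        - quantile (cond_law M X S f s) u\<bar> powr q) \<partial>lebesgue_01))
        = (\<Sum>s\<in>{1..K}. ennreal (w s) * Wq_pow q (law s) (cond_law M X S f s))"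
      by (intro sum.cong refl) (simp add: Wq_pow_eq_quantile_coupling[OF q real_distribution_law f_distr])
    also have "\<dots> \<le> ennreal (b powr q)"
      using sum_Wq_pow_cond_law_le_risk[OF f] risk_le by (rule order_trans)
    finally show "(\<Sum>s\<in>{1..K}. ennreal (w s) * (\<integral>\<^sup>+ u. ennreal (\<bar>quantile (law s) u
        - quantile (cond_law M X S f s) u\<bar> powr q) \<partial>lebesgue_01)) \<le> ennreal (b powr q)" .
  qed simp_all
  finally show ?thesis .
qed

lemma bary_cost_root_le:
  assumes f: "\<forall>s\<in>{1..K}. (\<lambda>x. f x s) \<in> borel_measurable N" and \<nu>: "\<nu> \<in> Pq q"
    and V: "(\<Sum>s\<in>{1..K}. ennreal (w s) * Wq_pow q (cond_law M X S f s) \<nu>) \<noteq> \<top>"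
    and R: "risk_q M X S K w q fstar f \<noteq> \<top>"
  shows "enn2real bary_cost powr (1 / q)
    \<le> enn2real (\<Sum>s\<in>{1..K}. ennreal (w s) * Wq_pow q (cond_law M X S f s) \<nu>) powr (1 / q)
      + enn2real (risk_q M X S K w q fstar f) powr (1 / q)"
proof (rule root_le_add_roots_of_powr_bounds)
  fix a b :: real
  assume "a > 0" "b > 0"
    and "enn2real (\<Sum>s\<in>{1..K}. ennreal (w s) * Wq_pow q (cond_law M X S f s) \<nu>) \<le> a powr q"
    and "enn2real (risk_q M X S K w q fstar f) \<le> b powr q"
  with V R have "bary_cost \<le> ennreal ((a + b) powr q)"
    by (intro bary_cost_le_of_powr_bounds[OF f \<nu>] le_ennreal_of_enn2real_le)
  then show "enn2real bary_cost \<le> (a + b) powr q"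
    using bary_cost_finite by (simp add: enn2real_leI)
qed (use q in auto)

lemma unfair_ge_of_risk:
  assumes f: "\<forall>s\<in>{1..K}. (\<lambda>x. f x s) \<in> borel_measurable N"
    and R: "risk_q M X S K w q fstar f \<noteq> \<top>"
    and c: "0 \<le> c" "c \<le> enn2real bary_cost powr (1 / q) - enn2real (risk_q M X S K w q fstar f) powr (1 / q)"
  shows "ennreal (c powr q) \<le> unfair_q M X S K w q f"
  unfolding unfair_q_def
proof (rule INF_greatest)
  fix \<nu> assume \<nu>: "\<nu> \<in> Pq q"
  define V where "V = (\<Sum>s\<in>{1..K}. ennreal (w s) * Wq_pow q (cond_law M X S f s) \<nu>)"
  show "ennreal (c powr q) \<le> (\<Sum>s\<in>{1..K}. ennreal (w s) * Wq_pow q (cond_law M X S f s) \<nu>)"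
  proof (cases "V = \<top>")
    case False
    then have "c \<le> enn2real V powr (1 / q)"
      using bary_cost_root_le[OF f \<nu> _ R] c by (simp add: V_def)
    then have "c powr q \<le> enn2real V"
      using powr_le_powr_iff[of q c "enn2real V powr (1 / q)"] q c(1)
      by (simp add: powr_inverse_powr)
    moreover have "ennreal (enn2real V) = V"
      using False by (simp add: less_top[symmetric])
    ultimately have "ennreal (c powr q) \<le> V"
      by (metis ennreal_leI)
    then show ?thesis by (simp add: V_def)
  next
    case True
    then show ?thesis unfolding V_def[symmetric] by simp
  qed
qed

lemma unfair_interpolant:
  assumes t: "0 \<le> t" "t \<le> 1"
  shows "unfair_q M X S K w q (interpolant t) = ennreal (t powr q) * bary_cost"
proof (rule antisym)
  show "unfair_q M X S K w q (interpolant t) \<le> ennreal (t powr q) * bary_cost"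
    by (rule unfair_interpolant_le[OF t(1)])
  define D where "D = enn2real bary_cost"
  have D: "D \<ge> 0" "bary_cost = ennreal D"
    using bary_cost_finite by (simp_all add: D_def)
  have q0: "q > 0" using q by simp
  have R: "risk_q M X S K w q fstar (interpolant t) = ennreal ((1 - t) powr q * D)"
    using risk_interpolant[OF t(2)] D by (simp add: ennreal_mult)
  have "ennreal ((t * D powr (1 / q)) powr q) \<le> unfair_q M X S K w q (interpolant t)"
  proof (rule unfair_ge_of_risk[OF measurable_interpolant])
    show "risk_q M X S K w q fstar (interpolant t) \<noteq> \<top>" by (simp add: R)
    show "0 \<le> t * D powr (1 / q)" using t by simp
    have "enn2real (risk_q M X S K w q fstar (interpolant t)) powr (1 / q) = (1 - t) * D powr (1 / q)"
      using R D t powr_root_mult[OF q0, of "1 - t" D] by simp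
    then show "t * D powr (1 / q)
        \<le> enn2real bary_cost powr (1 / q) - enn2real (risk_q M X S K w q fstar (interpolant t)) powr (1 / q)"
      by (simp add: D_def algebra_simps)
  qed
  moreover have "(t * D powr (1 / q)) powr q = t powr q * D"
    using t D q0 by (simp add: powr_mult powr_inverse_powr)
  ultimately show "ennreal (t powr q) * bary_cost \<le> unfair_q M X S K w q (interpolant t)"
    using D t by (simp add: ennreal_mult)
qed

lemma risk_interpolant_le:
  assumes t: "0 \<le> t" "t \<le> 1" and f: "\<forall>s\<in>{1..K}. (\<lambda>x. f x s) \<in> borel_measurable N"
    and unfair_le: "unfair_q M X S K w q f \<le> ennreal (t powr q) * bary_cost"
  shows "risk_q M X S K w q fstar (interpolant t) \<le> risk_q M X S K w q fstar f"
proof (cases "risk_q M X S K w q fstar f = \<top>")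
  case False
  define D where "D = enn2real bary_cost"
  define R where "R = enn2real (risk_q M X S K w q fstar f)"
  have D: "D \<ge> 0" "bary_cost = ennreal D"
    using bary_cost_finite by (simp_all add: D_def)
  have R: "R \<ge> 0" "risk_q M X S K w q fstar f = ennreal R"
    using False by (simp_all add: R_def less_top)
  have q0: "q > 0" using q by simp
  have "D powr (1 / q) - R powr (1 / q) \<le> t * D powr (1 / q)"
  proof (cases "D powr (1 / q) - R powr (1 / q) \<le> 0")
    case True
    moreover have "0 \<le> t * D powr (1 / q)" using t by simp
    ultimately show ?thesis by linarith
  next
    case False
    have "ennreal ((D powr (1 / q) - R powr (1 / q)) powr q) \<le> unfair_q M X S K w q f"
      using False by (intro unfair_ge_of_risk[OF f \<open>risk_q M X S K w q fstar f \<noteq> \<top>\<close>])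
        (simp_all add: D_def R_def)
    also have "\<dots> \<le> ennreal (t powr q * D)"
      using unfair_le D t by (simp add: ennreal_mult)
    finally have "(D powr (1 / q) - R powr (1 / q)) powr q \<le> (t * D powr (1 / q)) powr q"
      using t D q0 by (simp add: powr_mult powr_inverse_powr)
    then show ?thesis
      using powr_le_powr_iff[OF q0] False t by simp
  qed
  then have "((1 - t) * D powr (1 / q)) powr q \<le> (R powr (1 / q)) powr q"
    using t q0 mult_left_le_one_le[of "D powr (1 / q)" t] by (intro powr_mono2) (auto simp: algebra_simps)
  then have "(1 - t) powr q * D \<le> R"
    using D R t q0 by (simp add: powr_mult powr_inverse_powr)
  then show ?thesis
    using risk_interpolant[OF t(2)] D R by (simp add: ennreal_mult[symmetric] ennreal_leI)
qed simp

end

theorem theorem9: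
  fixes M :: "'a measure" and X :: "'a \<Rightarrow> real ^ 'p" and S :: "'a \<Rightarrow> nat"
    and K :: nat and w :: "nat \<Rightarrow> real" and q :: real and \<alpha> :: real
    and fstar :: "real ^ 'p \<Rightarrow> nat \<Rightarrow> real"
  assumes "prob_space M"
    and "K \<ge> 1"
    and "X \<in> borel_measurable M"
    and "S \<in> measurable M (count_space UNIV)"
    and "\<forall>\<omega>\<in>space M. S \<omega> \<in> {1..K}"
    and "\<forall>s\<in>{1..K}. measure M {\<omega> \<in> space M. S \<omega> = s} > 0"
    and "\<forall>s\<in>{1..K}. (\<lambda>x. fstar x s) \<in> borel_measurable borel"
    and "\<forall>s. w s \<ge> 0" and "(\<Sum>s\<in>{1..K}. w s) = 1"
    and "q \<ge> 1"
    and "\<forall>s\<in>{1..K}. \<forall>x. measure (cond_law M X S fstar s) {x} = 0"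
    and "\<forall>s\<in>{1..K}. (\<integral>\<^sup>+ x. ennreal (\<bar>x\<bar> powr q) \<partial>cond_law M X S fstar s) < \<infinity>"
    and "0 \<le> \<alpha>" and "\<alpha> \<le> 1"
  shows "\<exists>m :: real ^ 'p \<Rightarrow> nat \<Rightarrow> real.
    (\<forall>x. \<forall>s\<in>{1..K}.
       is_arg_min (\<lambda>y. \<Sum>s'\<in>{1..K}. w s' *
           \<bar>quantile (cond_law M X S fstar s') (cdf (cond_law M X S fstar s) (fstar x s)) - y\<bar> powr q)
         (\<lambda>_. True) (m x s)) \<and>
    (let g = (\<lambda>x s. \<alpha> powr (1 / q) * fstar x s + (1 - \<alpha> powr (1 / q)) * m x s) in
       (\<forall>s\<in>{1..K}. (\<lambda>x. g x s) \<in> borel_measurable borel) \<and>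
       unfair_q M X S K w q g \<le> ennreal \<alpha> * unfair_q M X S K w q fstar \<and>
       (\<forall>f :: real ^ 'p \<Rightarrow> nat \<Rightarrow> real.
          (\<forall>s\<in>{1..K}. (\<lambda>x. f x s) \<in> borel_measurable borel) \<longrightarrow>
          unfair_q M X S K w q f \<le> ennreal \<alpha> * unfair_q M X S K w q fstar \<longrightarrow>
          risk_q M X S K w q fstar g \<le> risk_q M X S K w q fstar f) \<and>
       risk_q M X S K w q fstar g
         = ennreal ((1 - \<alpha> powr (1 / q)) powr q) * unfair_q M X S K w q fstar \<and>
       unfair_q M X S K w q g = ennreal \<alpha> * unfair_q M X S K w q fstar)"
proof -
  interpret weighted_Lq_cost w K q
    using assms(2,8-10) by unfold_locales auto
  interpret fair_regression w K q M borel X S fstar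
    by (intro fair_regression.intro fair_regression_axioms.intro weighted_Lq_cost_axioms)
      (use assms in auto)
  define t where "t = \<alpha> powr (1 / q)"
  have t: "0 \<le> t" "t \<le> 1"
    using assms(13,14) q by (auto simp: t_def intro!: powr_le1)
  have "t powr q = \<alpha>"
    using assms(13) q by (simp add: t_def powr_inverse_powr)
  then show ?thesis
    unfolding Let_def t_def[symmetric] unfair_fstar_eq
    using bary_map_is_arg_min measurable_interpolant unfair_interpolant[OF t]
      risk_interpolant[OF t(2)] risk_interpolant_le[OF t]
    by (intro exI[of _ bary_map]) (simp add: interpolant_def[abs_def])
qed

end
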